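(* Let $\mathbb{F}$ be an algebraically closed field with $\mathrm{char}\,\mathbb{F}=2$. Let $\mathcal{A}$ be a (not necessarily unital) subalgebra of $\mathbf{O}$ of dimension $d\le3$ such that for some $\mathbb{F}$-basis $a_1,\ldots,a_d$ of some subalgebra in the ${\rm G}_2$-orbit of $\mathcal{A}$, the orbit ${\rm G}_2(a_1,\ldots,a_d)$ is Zariski closed in $\mathbf{O}^d$. Then there exists $g\in{\rm G}_2$ such that $g\mathcal{A}$ is the $\mathbb{F}$-span of one of the following sets: for $d=1$: $\{1_{\mathbf{O}}\}$ or $\{e_1\}$; for $d=2$: $\{e_1,e_2\}$. (In particular, $d\neq3$.)
   Context: The split octonion algebra $\mathbf{O}$ is the 8-dimensional $\mathbb{F}$-vector space of formal matrices $a=\begin{pmatrix}\alpha&\mathbf{u}\\ \mathbf{v}&\beta\end{pmatrix}$ with $\alpha,\beta\in\mathbb{F}$, $\mathbf{u},\mathbf{v}\in\mathbb{F}^3$, with multiplication $\begin{pmatrix}\alpha&\mathbf{u}\\ \mathbf{v}&\beta\end{pmatrix}\begin{pmatrix}\alpha'&\mathbf{u}'\\ \mathbf{v}'&\beta'\end{pmatrix}=\begin{pmatrix}\alpha\alpha'+\mathbf{u}\cdot\mathbf{v}'&\alpha\mathbf{u}'+\beta'\mathbf{u}-\mathbf{v}\times\mathbf{v}'\\ \alpha'\mathbf{v}+\beta\mathbf{v}'+\mathbf{u}\times\mathbf{u}'&\beta\beta'+\mathbf{v}\cdot\mathbf{u}'\end{pmatrix}$ (dot product and cross product on $\mathbb{F}^3$).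 $e_1$ has $\alpha=1$ and all else $0$, $e_2$ has $\beta=1$ and all else $0$, $1_{\mathbf{O}}=e_1+e_2$. ${\rm G}_2=\mathrm{Aut}(\mathbf{O})$ acts on $\mathbf{O}^d$ diagonally and on the set of subalgebras by $\mathcal{A}\mapsto g\mathcal{A}$. In the paper's terminology, the ${\rm G}_2$-orbit (equivalence class) of $\mathcal{A}$ is called closed when the stated condition holds. *)

theory Defs
  imports "HOL-Computational_Algebra.Polynomial"
begin

definition alg_closed :: "'a::field itself \<Rightarrow> bool" where
  "alg_closed _ \<longleftrightarrow> (\<forall>p :: 'a poly. degree p \<ge> 1 \<longrightarrow> (\<exists>x. poly p x = 0))"

type_synonym 'a vec3 = "'a \<times> 'a \<times> 'a"

fun vadd :: "'a::field vec3 \<Rightarrow> 'a vec3 \<Rightarrow> 'a vec3" where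
  "vadd (x1, x2, x3) (y1, y2, y3) = (x1 + y1, x2 + y2, x3 + y3)"

fun vscale :: "'a::field \<Rightarrow> 'a vec3 \<Rightarrow> 'a vec3" where
  "vscale c (x1, x2, x3) = (c * x1, c * x2, c * x3)"

fun dot3 :: "'a::field vec3 \<Rightarrow> 'a vec3 \<Rightarrow> 'a" where
  "dot3 (x1, x2, x3) (y1, y2, y3) = x1 * y1 + x2 * y2 + x3 * y3"

fun cross3 :: "'a::field vec3 \<Rightarrow> 'a vec3 \<Rightarrow> 'a vec3" where
  "cross3 (x1, x2, x3) (y1, y2, y3) =
     (x2 * y3 - x3 * y2, x3 * y1 - x1 * y3, x1 * y2 - x2 * y1)"

section \<open>Split octonions: Zorn vector matrices (alpha, u, v, beta)\<close>

datatype 'a oct = Oct 'a "'a vec3" "'a vec3" 'a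

fun oadd :: "'a::field oct \<Rightarrow> 'a oct \<Rightarrow> 'a oct" where
  "oadd (Oct a u v b) (Oct a' u' v' b') = Oct (a + a') (vadd u u') (vadd v v') (b + b')"

fun oscale :: "'a::field \<Rightarrow> 'a oct \<Rightarrow> 'a oct" where
  "oscale c (Oct a u v b) = Oct (c * a) (vscale c u) (vscale c v) (c * b)"

definition ozero :: "'a::field oct" where
  "ozero = Oct 0 (0, 0, 0) (0, 0, 0) 0"

fun omult :: "'a::field oct \<Rightarrow> 'a oct \<Rightarrow> 'a oct" where
  "omult (Oct a u v b) (Oct a' u' v' b') =
     Oct (a * a' + dot3 u v')
         (vadd (vadd (vscale a u') (vscale b' u)) (vscale (-1) (cross3 v v')))
         (vadd (vadd (vscale a' v) (vscale b v')) (cross3 u u'))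
         (b * b' + dot3 v u')"

definition oe1 :: "'a::field oct" where "oe1 = Oct 1 (0, 0, 0) (0, 0, 0) 0"
definition oe2 :: "'a::field oct" where "oe2 = Oct 0 (0, 0, 0) (0, 0, 0) 1"
definition oone :: "'a::field oct" where "oone = Oct 1 (0, 0, 0) (0, 0, 0) 1"

fun ocoord :: "'a::field oct \<Rightarrow> nat \<Rightarrow> 'a" where
  "ocoord (Oct a (u1, u2, u3) (v1, v2, v3) b) k =
     (if k = 0 then a else if k = 1 then u1 else if k = 2 then u2 else if k = 3 then u3
      else if k = 4 then v1 else if k = 5 then v2 else if k = 6 then v3
      else if k = 7 then b else 0)"

definition lin_comb :: "'a::field list \<Rightarrow> 'a oct list \<Rightarrow> 'a oct" where
  "lin_comb cs xs = foldr oadd (map2 oscale cs xs) ozero"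

definition span_list :: "'a::field oct list \<Rightarrow> 'a oct set" where
  "span_list xs = {y. \<exists>cs. length cs = length xs \<and> y = lin_comb cs xs}"

definition lin_indep :: "'a::field oct list \<Rightarrow> bool" where
  "lin_indep xs \<longleftrightarrow>
     (\<forall>cs. length cs = length xs \<and> lin_comb cs xs = ozero \<longrightarrow> (\<forall>c\<in>set cs. c = 0))"

definition is_basis :: "'a::field oct list \<Rightarrow> 'a oct set \<Rightarrow> bool" where
  "is_basis xs A \<longleftrightarrow> lin_indep xs \<and> span_list xs = A"

definition subalgebra :: "'a::field oct set \<Rightarrow> bool" where
  "subalgebra A \<longleftrightarrow> ozero \<in> A \<and> (\<forall>x\<in>A. \<forall>y\<in>A. oadd x y \<in> A)
     \<and> (\<forall>c. \<forall>x\<in>A. oscale c x \<in> A) \<and> (\<forall>x\<in>A. \<forall>y\<in>A. omult x y \<in> A)"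

definition has_dim :: "'a::field oct set \<Rightarrow> nat \<Rightarrow> bool" where
  "has_dim A d \<longleftrightarrow> (\<exists>xs. length xs = d \<and> is_basis xs A)"

definition G2 :: "('a::field oct \<Rightarrow> 'a oct) set" where
  "G2 = {g. bij g \<and> (\<forall>x y. g (oadd x y) = oadd (g x) (g y))
           \<and> (\<forall>c x. g (oscale c x) = oscale c (g x))
           \<and> (\<forall>x y. g (omult x y) = omult (g x) (g y))}"

datatype 'a mpoly_expr = PConst 'a | PVar nat
  | PAdd "'a mpoly_expr" "'a mpoly_expr" | PMul "'a mpoly_expr" "'a mpoly_expr"

fun peval :: "'a::field mpoly_expr \<Rightarrow> (nat \<Rightarrow> 'a) \<Rightarrow> 'a" where
  "peval (PConst c) x = c"
| "peval (PVar i) x = x i"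
| "peval (PAdd p q) x = peval p x + peval q x"
| "peval (PMul p q) x = peval p x * peval q x"

definition tuple_coords :: "'a::field oct list \<Rightarrow> nat \<Rightarrow> 'a" where
  "tuple_coords xs k = (if k < 8 * length xs then ocoord (xs ! (k div 8)) (k mod 8) else 0)"

definition zariski_closed :: "nat \<Rightarrow> 'a::field oct list set \<Rightarrow> bool" where
  "zariski_closed d S \<longleftrightarrow>
     (\<exists>P :: 'a mpoly_expr set.
        S = {xs. length xs = d \<and> (\<forall>p\<in>P. peval p (tuple_coords xs) = 0)})"

definition G2_orbit_tuple :: "'a::field oct list \<Rightarrow> 'a oct list set" where
  "G2_orbit_tuple xs = {map g xs | g. g \<in> G2}"

end

theory Submission
  imports Defs
begin

text \<open>
  Every \<open>x \<in> \<^bold>O\<close> satisfies \<open>x\<^sup>2 = t(x) x - n(x) 1\<close> with trace \<open>t = \<alpha> + \<beta>\<close> and norm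
  \<open>n = \<alpha>\<beta> - \<^bold>u\<cdot>\<^bold>v\<close>. Hence a subalgebra \<open>\<A>\<close> either contains an idempotent \<open>e \<noteq> 0, 1\<close>,
  which \<open>G\<^sub>2\<close> moves to \<open>e\<^sub>1\<close>, or else, \<open>F\<close> being algebraically closed of characteristic 2,
  it is \<open>F1\<close> or contains a nonzero element of square zero, which \<open>G\<^sub>2\<close> moves to the root
  vector \<open>(0, (1,0,0), 0, 0)\<close>.

  Closedness of the orbit of a basis enters through the one-parameter subgroup
  \<open>t \<mapsto> diag(t\<^sup>2, t\<^sup>-\<^sup>1, t\<^sup>-\<^sup>1)\<close> of \<open>SL\<^sub>3 \<subseteq> G\<^sub>2\<close>: if a conjugate of \<open>\<A>\<close> lies in the sum
  of its weight spaces of nonnegative weight and contains a nonzero vector of positive weight,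
  then as \<open>t \<rightarrow> 0\<close> the moved basis tends to a linearly dependent tuple, which would have to
  lie in the closed orbit of an independent one. Further explicit automorphisms (the swap
  \<open>u \<leftrightarrow> v\<close>, shears, \<open>SL\<^sub>3\<close>) and the bound \<open>dim \<A> \<le> 3\<close> bring every remaining case into
  this situation, except \<open>F1\<close>, \<open>Fe\<^sub>1\<close> and \<open>Fe\<^sub>1 \<oplus> Fe\<^sub>2\<close>.
\<close>

lemma char2_two: "CHAR('a::field) = 2 \<Longrightarrow> (2 :: 'a) = 0"
  using of_nat_CHAR[where 'a = 'a] by simp

lemma char2_add_self: "CHAR('a::field) = 2 \<Longrightarrow> (x :: 'a) + x = 0"
  by (metis char2_two mult_2 mult_zero_left)

lemma alg_closed_quadratic_root:
  assumes "alg_closed TYPE('a::field)"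
  shows "\<exists>s :: 'a. s * s + p * s + q = 0"
proof -
  have "1 \<le> degree [:q, p, 1:]"
    by simp
  then obtain s where "poly [:q, p, 1:] s = 0"
    using assms unfolding alg_closed_def by blast
  then show ?thesis
    by (auto simp: algebra_simps)
qed

lemma alg_closed_infinite:
  assumes "alg_closed TYPE('a::field)"
  shows "infinite (UNIV :: 'a set)"
proof
  assume fin: "finite (UNIV :: 'a set)"
  define q :: "'a poly" where "q = (\<Prod>a\<in>UNIV. [:- a, 1:])"
  have "degree q = card (UNIV :: 'a set)"
    unfolding q_def by (subst degree_prod_eq_sum_degree) auto
  then have "degree (q + 1) \<ge> 1"
    using fin by (simp add: degree_add_eq_left Suc_le_eq card_gt_0_iff)
  then obtain x where "poly (q + 1) x = 0"
    using assms unfolding alg_closed_def by blast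
  moreover have "poly q x = 0"
    unfolding q_def poly_prod using fin by (intro prod_zero) (auto intro!: bexI[of _ x])
  ultimately show False
    by simp
qed

lemma oct_coords_cases:
  obtains a u1 u2 u3 v1 v2 v3 b where "x = Oct a (u1, u2, u3) (v1, v2, v3) b"
  by (metis oct.exhaust prod_cases3)

instantiation oct :: (field) ab_group_add
begin

definition zero_oct_def: "0 = (ozero :: 'a oct)"
definition plus_oct_def: "x + y = oadd (x :: 'a oct) y"
definition uminus_oct_def: "- x = oscale (-1) (x :: 'a oct)"
definition minus_oct_def: "x - y = oadd (x :: 'a oct) (oscale (-1) y)"

instance
proof
  fix x y z :: "'a oct"
  show "x + y + z = x + (y + z)"
    by (rule oct_coords_cases[of x], rule oct_coords_cases[of y], rule oct_coords_cases[of z])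
      (simp add: plus_oct_def algebra_simps)
  show "x + y = y + x"
    by (rule oct_coords_cases[of x], rule oct_coords_cases[of y]) (simp add: plus_oct_def algebra_simps)
  show "0 + x = x"
    by (rule oct_coords_cases[of x]) (simp add: plus_oct_def zero_oct_def ozero_def)
  show "- x + x = 0"
    by (rule oct_coords_cases[of x]) (simp add: plus_oct_def uminus_oct_def zero_oct_def ozero_def)
  show "x - y = x + - y"
    by (simp add: minus_oct_def plus_oct_def uminus_oct_def)
qed

end

lemma Oct_plus [simp]: "Oct a u v b + Oct a' u' v' b' = Oct (a + a') (vadd u u') (vadd v v') (b + b')"
  by (simp add: plus_oct_def)

lemma Oct_minus [simp]:
  "Oct a u v b - Oct a' u' v' b' = Oct (a - a') (vadd u (vscale (-1) u')) (vadd v (vscale (-1) v')) (b - b')"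
  by (simp add: minus_oct_def)

lemma zero_oct_eq: "(0 :: 'a::field oct) = Oct 0 (0, 0, 0) (0, 0, 0) 0"
  by (simp add: zero_oct_def ozero_def)

lemma ozero_eq_zero: "ozero = 0"
  by (simp add: zero_oct_def)

lemma oadd_eq_plus: "oadd x y = x + y"
  by (simp add: plus_oct_def)

lemma oscale_add_right: "oscale c (x + y) = oscale c x + oscale c (y :: 'a::field oct)"
  by (rule oct_coords_cases[of x], rule oct_coords_cases[of y]) (simp add: algebra_simps)

lemma oscale_add_left: "oscale (c + c') x = oscale c x + oscale c' (x :: 'a::field oct)"
  by (rule oct_coords_cases[of x]) (simp add: algebra_simps)

lemma oscale_diff_left: "oscale (c - c') x = oscale c x - oscale c' (x :: 'a::field oct)"
  by (rule oct_coords_cases[of x]) (simp add: algebra_simps)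

lemma oscale_oscale [simp]: "oscale c (oscale c' x) = oscale (c * c') (x :: 'a::field oct)"
  by (rule oct_coords_cases[of x]) (simp add: algebra_simps)

lemma oscale_one [simp]: "oscale 1 x = (x :: 'a::field oct)"
  by (rule oct_coords_cases[of x]) simp

lemma oscale_zero_left [simp]: "oscale 0 x = (0 :: 'a::field oct)"
  by (rule oct_coords_cases[of x]) (simp add: zero_oct_eq)

lemma oscale_zero_right [simp]: "oscale c 0 = (0 :: 'a::field oct)"
  by (simp add: zero_oct_eq)

global_interpretation oct: vector_space "oscale :: 'a::field \<Rightarrow> 'a oct \<Rightarrow> 'a oct"
  by unfold_locales (simp_all add: oscale_add_right oscale_add_left)

lemma lin_comb_Nil [simp]: "lin_comb [] xs = 0" "lin_comb cs [] = 0"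
  by (simp_all add: lin_comb_def zero_oct_def)

lemma lin_comb_Cons [simp]: "lin_comb (c # cs) (x # xs) = oscale c x + lin_comb cs xs"
  by (simp add: lin_comb_def plus_oct_def)

lemma lin_comb_add:
  "length cs = length ds \<Longrightarrow> lin_comb cs xs + lin_comb ds xs = lin_comb (map2 (+) cs ds) xs"
proof (induction xs arbitrary: cs ds)
  case (Cons x xs)
  then show ?case
    by (cases cs; cases ds) (simp_all add: oscale_add_left algebra_simps)
qed simp

lemma oscale_lin_comb: "oscale c (lin_comb cs xs) = lin_comb (map ((*) c) cs) xs"
proof (induction xs arbitrary: cs)
  case (Cons x xs)
  then show ?case by (cases cs) (simp_all add: oscale_add_right)
qed simp

lemma lin_comb_zeros: "lin_comb (replicate (length xs) 0) xs = 0"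
  by (induction xs) simp_all

lemma lin_comb_update:
  "length cs = length xs \<Longrightarrow> i < length xs \<Longrightarrow>
    lin_comb (cs[i := c]) xs = lin_comb cs xs + oscale (c - cs ! i) (xs ! i)"
proof (induction xs arbitrary: cs i)
  case (Cons x xs)
  then show ?case
    by (cases cs; cases i) (simp_all add: oscale_diff_left)
qed simp

lemma lin_comb_zero_coeffs: "\<forall>c\<in>set cs. c = 0 \<Longrightarrow> lin_comb cs xs = 0"
proof (induction xs arbitrary: cs)
  case (Cons x xs)
  then show ?case by (cases cs) simp_all
qed simp

lemma lin_comb_unit: "i < length xs \<Longrightarrow> lin_comb ((replicate (length xs) 0)[i := 1]) xs = xs ! i"
  by (simp add: lin_comb_update lin_comb_zeros)

lemma span_list_subspace: "oct.subspace (span_list xs)"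
  unfolding oct.subspace_def
proof (intro conjI ballI allI)
  show "0 \<in> span_list xs"
    unfolding span_list_def by (auto intro!: exI[of _ "replicate (length xs) 0"] simp: lin_comb_zeros)
next
  fix x y assume "x \<in> span_list xs" "y \<in> span_list xs"
  then obtain cs ds where "length cs = length xs" "x = lin_comb cs xs"
      "length ds = length xs" "y = lin_comb ds xs"
    unfolding span_list_def by blast
  then show "x + y \<in> span_list xs"
    unfolding span_list_def by (auto simp: lin_comb_add intro!: exI[of _ "map2 (+) cs ds"])
next
  fix c x assume "x \<in> span_list xs"
  then obtain cs where "length cs = length xs" "x = lin_comb cs xs"
    unfolding span_list_def by blast
  then show "oscale c x \<in> span_list xs"
    unfolding span_list_def by (auto simp: oscale_lin_comb intro!: exI[of _ "map ((*) c) cs"])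
qed

lemma set_subset_span_list: "set xs \<subseteq> span_list xs"
proof
  fix x assume "x \<in> set xs"
  then obtain i where "i < length xs" "xs ! i = x"
    by (meson in_set_conv_nth)
  then show "x \<in> span_list xs"
    unfolding span_list_def by (auto simp: lin_comb_unit intro!: exI[of _ "(replicate (length xs) 0)[i := 1]"])
qed

lemma span_list_eq_span: "span_list xs = oct.span (set xs)"
proof
  have "lin_comb cs xs \<in> oct.span (set xs)" for cs
  proof (induction xs arbitrary: cs)
    case (Cons x xs)
    then show ?case
      by (cases cs) (auto intro: oct.span_zero oct.span_add oct.span_scale oct.span_base
          oct.span_mono[THEN subsetD, of "set xs"])
  qed (simp add: oct.span_zero)
  then show "span_list xs \<subseteq> oct.span (set xs)"
    unfolding span_list_def by blast
  show "oct.span (set xs) \<subseteq> span_list xs"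
    by (rule oct.span_minimal[OF set_subset_span_list span_list_subspace])
qed

lemma lin_indep_distinct:
  assumes "lin_indep xs"
  shows "distinct xs"
proof (rule ccontr)
  assume "\<not> distinct xs"
  then obtain i j where ij: "i < length xs" "j < length xs" "i \<noteq> j" "xs ! i = xs ! j"
    by (auto simp: distinct_conv_nth)
  define cs where "cs = (replicate (length xs) (0 :: 'a))[i := 1, j := -1]"
  have "lin_comb cs xs = lin_comb ((replicate (length xs) 0)[i := 1]) xs + oscale (-1) (xs ! j)"
    using ij unfolding cs_def by (subst lin_comb_update) simp_all
  also have "\<dots> = 0"
    using ij by (simp add: lin_comb_unit uminus_oct_def[symmetric])
  finally have "\<forall>c\<in>set cs. c = 0"
    using assms unfolding lin_indep_def ozero_eq_zero by (metis cs_def length_list_update length_replicate)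
  moreover have "cs ! i = 1"
    using ij by (simp add: cs_def)
  ultimately show False
    using ij by (metis cs_def length_list_update length_replicate nth_mem one_neq_zero)
qed

lemma lin_comb_map_distinct:
  "distinct xs \<Longrightarrow> lin_comb (map u xs) xs = (\<Sum>v\<in>set xs. oscale (u v) v)"
  by (induction xs) (simp_all add: sum.insert)

lemma lin_indep_independent:
  assumes "lin_indep xs"
  shows "oct.independent (set xs)"
proof
  assume "oct.dependent (set xs)"
  then obtain u v where uv: "v \<in> set xs" "u v \<noteq> 0" "(\<Sum>v\<in>set xs. oscale (u v) v) = 0"
    using oct.dependent_finite[of "set xs"] by auto
  then have "lin_comb (map u xs) xs = 0"
    by (simp add: lin_comb_map_distinct lin_indep_distinct[OF assms])
  then have "\<forall>c\<in>set (map u xs). c = 0"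
    using assms unfolding lin_indep_def ozero_eq_zero by (metis length_map)
  then show False
    using uv by auto
qed

lemma has_dim_independent_card_le:
  assumes "has_dim B d" "oct.independent S" "S \<subseteq> B"
  shows "finite S \<and> card S \<le> d"
proof -
  obtain as where "length as = d" "B = oct.span (set as)"
    using assms(1) unfolding has_dim_def is_basis_def span_list_eq_span by blast
  then show ?thesis
    using oct.independent_span_bound[of "set as" S] assms(2,3) card_length[of as] by auto
qed

lemma has_dim_le_card_spanning:
  assumes "has_dim B d" "B \<subseteq> oct.span T" "finite T"
  shows "d \<le> card T"
proof -
  obtain as where as: "length as = d" "lin_indep as" "B = span_list as"
    using assms(1) unfolding has_dim_def is_basis_def by blast
  have "set as \<subseteq> oct.span T"
    using as(3) assms(2) set_subset_span_list by blast
  then have "card (set as) \<le> card T"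
    using oct.independent_span_bound[OF assms(3) lin_indep_independent[OF as(2)]] by blast
  then show ?thesis
    using as(1) distinct_card[OF lin_indep_distinct[OF as(2)]] by simp
qed

lemma lin_indep_length_le_dim:
  assumes "has_dim B d" "lin_indep zs" "set zs \<subseteq> B"
  shows "length zs \<le> d"
  using has_dim_independent_card_le[OF assms(1) lin_indep_independent[OF assms(2)] assms(3)]
  by (simp add: distinct_card[OF lin_indep_distinct[OF assms(2)]])

lemma has_dim_le_length:
  assumes "has_dim B d" "B \<subseteq> span_list zs"
  shows "d \<le> length zs"
  using has_dim_le_card_spanning[OF assms(1), of "set zs"] assms(2) card_length[of zs]
  by (simp add: span_list_eq_span)

lemma has_dim_subset_span_list:
  assumes "has_dim B d" "lin_indep zs" "set zs \<subseteq> B" "d \<le> length zs"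
  shows "B \<subseteq> span_list zs"
proof
  fix w assume w: "w \<in> B"
  show "w \<in> span_list zs"
  proof (rule ccontr)
    assume "w \<notin> span_list zs"
    then have "oct.independent (insert w (set zs))" "w \<notin> set zs"
      using oct.independent_insertI lin_indep_independent[OF assms(2)] set_subset_span_list
      by (auto simp: span_list_eq_span)
    moreover have "insert w (set zs) \<subseteq> B"
      using w assms(3) by blast
    ultimately have "card (insert w (set zs)) \<le> d"
      using has_dim_independent_card_le[OF assms(1)] by blast
    then show False
      using assms(4) \<open>w \<notin> set zs\<close> distinct_card[OF lin_indep_distinct[OF assms(2)]] by simp
  qed
qed

lemma has_dim_basis_length:
  assumes "has_dim B d" "is_basis zs B"
  shows "length zs = d"
  using lin_indep_length_le_dim[OF assms(1)] has_dim_le_length[OF assms(1)] set_subset_span_list[of zs] assms(2)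
  unfolding is_basis_def by (simp add: dual_order.antisym)

lemma oct_module: "module (oscale :: 'a::field \<Rightarrow> 'a oct \<Rightarrow> 'a oct)"
  by (simp add: module_iff_vector_space oct.vector_space_axioms)

lemma oct_module_homI:
  assumes "\<And>x y. f (x + y) = f x + f y" "\<And>c x. f (oscale c x) = oscale c (f x)"
  shows "module_hom oscale oscale (f :: 'a::field oct \<Rightarrow> 'a oct)"
  using assms oct_module by (simp add: module_hom_iff)

lemma module_hom_lin_comb:
  assumes "module_hom oscale oscale f"
  shows "f (lin_comb cs xs) = lin_comb cs (map f xs)"
proof (induction xs arbitrary: cs)
  case Nil
  show ?case using module_hom.zero[OF assms] by simp
next
  case (Cons x xs)
  then show ?case
    using module_hom.zero[OF assms] module_hom.add[OF assms] module_hom.scale[OF assms]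
    by (cases cs) simp_all
qed

lemma span_list_subset: "oct.subspace S \<Longrightarrow> set xs \<subseteq> S \<Longrightarrow> span_list xs \<subseteq> S"
  by (simp add: span_list_eq_span oct.span_minimal)

lemma subalgebra_subspace: "subalgebra B \<Longrightarrow> oct.subspace B"
  by (simp add: subalgebra_def oct.subspace_def ozero_eq_zero oadd_eq_plus)

lemma subalgebra_mult: "subalgebra B \<Longrightarrow> x \<in> B \<Longrightarrow> y \<in> B \<Longrightarrow> omult x y \<in> B"
  by (simp add: subalgebra_def)

lemmas subalgebra_zero = oct.subspace_0[OF subalgebra_subspace]
  and subalgebra_add = oct.subspace_add[OF subalgebra_subspace]
  and subalgebra_scale = oct.subspace_scale[OF subalgebra_subspace]
  and subalgebra_diff = oct.subspace_diff[OF subalgebra_subspace]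

lemma G2_module_hom: "g \<in> G2 \<Longrightarrow> module_hom oscale oscale g"
  by (rule oct_module_homI) (simp_all add: G2_def plus_oct_def)

lemma G2_mult: "g \<in> G2 \<Longrightarrow> g (omult x y) = omult (g x) (g y)"
  by (simp add: G2_def)

lemma G2_bij: "g \<in> G2 \<Longrightarrow> bij g"
  by (simp add: G2_def)

lemma G2_inj: "g \<in> G2 \<Longrightarrow> inj g"
  by (simp add: G2_bij bij_is_inj)

lemmas G2_add = module_hom.add[OF G2_module_hom]
  and G2_scale = module_hom.scale[OF G2_module_hom]
  and G2_zero = module_hom.zero[OF G2_module_hom]
  and G2_lin_comb = module_hom_lin_comb[OF G2_module_hom]

lemma G2_eq_zero_iff:
  assumes "g \<in> G2"
  shows "g x = 0 \<longleftrightarrow> x = 0"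
proof -
  have "g x = g 0 \<longleftrightarrow> x = 0"
    using G2_inj[OF assms] by (simp add: inj_eq)
  then show ?thesis
    by (simp add: G2_zero[OF assms])
qed

lemma omult_oone_left [simp]: "omult oone x = x"
  by (rule oct_coords_cases[of x]) (simp add: oone_def)

lemma omult_oone_right [simp]: "omult x oone = x"
  by (rule oct_coords_cases[of x]) (simp add: oone_def)

lemma G2_oone:
  assumes "g \<in> G2"
  shows "g oone = oone"
proof -
  obtain x where x: "g x = oone"
    using G2_bij[OF assms] by (metis bij_def surjD)
  have "g oone = omult (g oone) (g x)"
    by (simp add: x)
  also have "\<dots> = g (omult oone x)"
    by (rule G2_mult[OF assms, symmetric])
  also have "\<dots> = oone"
    by (simp add: x)
  finally show ?thesis .
qed

lemma G2_id: "id \<in> G2"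
  by (simp add: G2_def)

lemma G2_comp: "g \<in> G2 \<Longrightarrow> h \<in> G2 \<Longrightarrow> g \<circ> h \<in> G2"
  by (auto simp: G2_def intro: bij_comp)

lemma G2_inv:
  assumes "g \<in> G2"
  shows "inv g \<in> G2"
proof -
  have b: "bij g"
    using G2_bij[OF assms] .
  have lin: "module_hom oscale oscale (inv g)"
    by (rule bij_module_hom_imp_inv_module_hom[OF G2_module_hom[OF assms] b])
  have "inv g (omult x y) = omult (inv g x) (inv g y)" for x y
  proof -
    have "g (omult (inv g x) (inv g y)) = omult x y"
      using b by (simp add: G2_mult[OF assms] bij_is_surj surj_f_inv_f)
    then show ?thesis
      using b by (metis bij_is_inj inv_f_f)
  qed
  then show ?thesis
    using bij_imp_bij_inv[OF b] module_hom.add[OF lin] module_hom.scale[OF lin]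
    unfolding G2_def oadd_eq_plus by blast
qed

lemma G2_image_subalgebra:
  assumes g: "g \<in> G2" and B: "subalgebra B"
  shows "subalgebra (g ` B)"
  unfolding subalgebra_def ozero_eq_zero oadd_eq_plus
proof (intro conjI ballI allI)
  show "0 \<in> g ` B"
    using subalgebra_zero[OF B] G2_zero[OF g] by (metis imageI)
next
  fix x y assume "x \<in> g ` B" "y \<in> g ` B"
  then obtain x' y' where "x' \<in> B" "y' \<in> B" "x = g x'" "y = g y'"
    by blast
  then show "x + y \<in> g ` B" "omult x y \<in> g ` B"
    using subalgebra_add[OF B] subalgebra_mult[OF B] G2_add[OF g] G2_mult[OF g] by (metis imageI)+
next
  fix c x assume "x \<in> g ` B"
  then obtain x' where "x' \<in> B" "x = g x'"
    by blast
  then show "oscale c x \<in> g ` B"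
    using subalgebra_scale[OF B] G2_scale[OF g] by (metis imageI)
qed

lemma G2_image_span_list: "g \<in> G2 \<Longrightarrow> g ` span_list xs = span_list (map g xs)"
  unfolding span_list_def using G2_lin_comb by fastforce

lemma G2_lin_indep:
  assumes g: "g \<in> G2" and "lin_indep xs"
  shows "lin_indep (map g xs)"
  unfolding lin_indep_def ozero_eq_zero
proof (intro allI impI)
  fix cs assume "length cs = length (map g xs) \<and> lin_comb cs (map g xs) = 0"
  then have "length cs = length xs" "lin_comb cs xs = 0"
    by (simp_all add: G2_lin_comb[OF g, symmetric] G2_eq_zero_iff[OF g])
  then show "\<forall>c\<in>set cs. c = 0"
    using \<open>lin_indep xs\<close> unfolding lin_indep_def ozero_eq_zero by blast
qed

lemma G2_image_is_basis:
  assumes "g \<in> G2" "is_basis xs B"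
  shows "is_basis (map g xs) (g ` B)"
proof -
  have "B = span_list xs" "lin_indep xs"
    using assms(2) by (simp_all add: is_basis_def)
  then show ?thesis
    using assms(1) by (simp add: is_basis_def G2_lin_indep G2_image_span_list)
qed

lemma G2_image_has_dim:
  assumes "g \<in> G2" "has_dim B d"
  shows "has_dim (g ` B) d"
proof -
  obtain xs where "length xs = d" "is_basis xs B"
    using assms(2) unfolding has_dim_def by blast
  then show ?thesis
    unfolding has_dim_def using G2_image_is_basis[OF assms(1)] by (intro exI[of _ "map g xs"]) simp
qed

lemma G2_orbit_tuple_map:
  assumes "g \<in> G2"
  shows "G2_orbit_tuple (map g xs) = G2_orbit_tuple xs"
proof (intro set_eqI iffI)
  fix ys assume "ys \<in> G2_orbit_tuple (map g xs)"
  then obtain h where "h \<in> G2" "ys = map (h \<circ> g) xs"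
    unfolding G2_orbit_tuple_def by auto
  then show "ys \<in> G2_orbit_tuple xs"
    unfolding G2_orbit_tuple_def using G2_comp[OF _ assms] by blast
next
  fix ys assume "ys \<in> G2_orbit_tuple xs"
  then obtain h where h: "h \<in> G2" "ys = map h xs"
    unfolding G2_orbit_tuple_def by auto
  then have "ys = map (h \<circ> inv g) (map g xs)"
    using G2_inj[OF assms] by simp
  then show "ys \<in> G2_orbit_tuple (map g xs)"
    unfolding G2_orbit_tuple_def using G2_comp[OF h(1) G2_inv[OF assms]] by blast
qed

section \<open>Trace and norm\<close>

fun otrace :: "'a::field oct \<Rightarrow> 'a" where
  "otrace (Oct a u v b) = a + b"

fun onorm :: "'a::field oct \<Rightarrow> 'a" where
  "onorm (Oct a u v b) = a * b - dot3 u v"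

lemma omult_self: "omult x x = oscale (otrace x) x - oscale (onorm x) oone"
  by (rule oct_coords_cases[of x]) (simp add: oone_def algebra_simps)

lemma otrace_zero [simp]: "otrace 0 = 0"
  by (simp add: zero_oct_eq)

lemma otrace_oscale [simp]: "otrace (oscale c x) = c * otrace x"
  by (rule oct_coords_cases[of x]) (simp add: algebra_simps)

lemma onorm_oscale [simp]: "onorm (oscale c x) = c * c * onorm x"
  by (rule oct_coords_cases[of x]) (simp add: algebra_simps)

lemma otrace_diff_scalar: "otrace (x - oscale s oone) = otrace x - 2 * s"
  by (rule oct_coords_cases[of x]) (simp add: oone_def algebra_simps)

lemma onorm_diff_scalar: "onorm (x - oscale s oone) = onorm x - s * otrace x + s * s"
  by (rule oct_coords_cases[of x]) (simp add: oone_def algebra_simps)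

lemma omult_scalar: "omult (oscale c oone) (oscale c' oone) = oscale (c * c') oone"
  by (simp add: oone_def)

lemma oscale_oone_eq_iff: "oscale c oone = oscale c' oone \<longleftrightarrow> c = c'"
  by (simp add: oone_def)

lemma oone_neq_zero [simp]: "oone \<noteq> (0 :: 'a::field oct)"
  by (simp add: oone_def zero_oct_eq)

lemma oscale_oone_eq_zero_iff: "oscale c oone = 0 \<longleftrightarrow> c = 0"
  by (simp add: oone_def zero_oct_eq)

lemma scalar_if_oscale_eq:
  assumes "oscale p x = oscale q oone" "p \<noteq> 0"
  shows "x = oscale (q / p) oone"
  using arg_cong[OF assms(1), of "oscale (1 / p)"] assms(2) by simp

definition nontrivial_idempotent :: "'a::field oct \<Rightarrow> bool" where
  "nontrivial_idempotent e \<longleftrightarrow> omult e e = e \<and> e \<noteq> 0 \<and> e \<noteq> oone"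

lemma nontrivial_idempotent_iff: "nontrivial_idempotent x \<longleftrightarrow> otrace x = 1 \<and> onorm x = 0"
proof
  assume idem: "nontrivial_idempotent x"
  have lin: "oscale (otrace x - 1) x = oscale (onorm x) oone"
    using idem omult_self[of x] by (simp add: nontrivial_idempotent_def oscale_diff_left algebra_simps)
  have "otrace x = 1"
  proof (rule ccontr)
    assume "otrace x \<noteq> 1"
    then obtain c where c: "x = oscale c oone"
      using scalar_if_oscale_eq[OF lin] by auto
    have "omult x x = x"
      using idem by (simp add: nontrivial_idempotent_def)
    then have "oscale (c * c) oone = oscale c oone"
      by (simp only: c omult_scalar)
    then have "c * c = c"
      by (simp only: oscale_oone_eq_iff)
    then have "c = 0 \<or> c = 1"
      by (metis mult_cancel_right1 mult_zero_right)
    then show False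
      using idem unfolding c nontrivial_idempotent_def by auto
  qed
  moreover have "onorm x = 0"
    using lin \<open>otrace x = 1\<close> by (simp add: eq_commute[of 0] oscale_oone_eq_zero_iff)
  ultimately show "otrace x = 1 \<and> onorm x = 0" ..
next
  assume t: "otrace x = 1 \<and> onorm x = 0"
  have "x \<noteq> 0" "x \<noteq> oone"
    using t by (auto simp: zero_oct_eq oone_def)
  then show "nontrivial_idempotent x"
    using t omult_self[of x] by (simp add: nontrivial_idempotent_def)
qed

lemma square_zero_iff: "omult x x = 0 \<longleftrightarrow> otrace x = 0 \<and> onorm x = 0"
proof
  assume sq: "omult x x = 0"
  have lin: "oscale (otrace x) x = oscale (onorm x) oone"
    using sq omult_self[of x] by simp
  have "otrace x = 0"
  proof (rule ccontr)
    assume "otrace x \<noteq> 0"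
    then obtain c where c: "x = oscale c oone"
      using scalar_if_oscale_eq[OF lin] by auto
    then have "c = 0"
      using sq by (simp add: omult_scalar oscale_oone_eq_zero_iff)
    then show False
      using c \<open>otrace x \<noteq> 0\<close> by simp
  qed
  then show "otrace x = 0 \<and> onorm x = 0"
    using lin by (simp add: eq_commute[of 0] oscale_oone_eq_zero_iff)
next
  assume "otrace x = 0 \<and> onorm x = 0"
  then show "omult x x = 0"
    by (simp add: omult_self)
qed

lemma nontrivial_idempotent_normalize:
  "onorm y = 0 \<Longrightarrow> otrace y \<noteq> 0 \<Longrightarrow> nontrivial_idempotent (oscale (1 / otrace y) y)"
  by (simp add: nontrivial_idempotent_iff)

section \<open>Explicit automorphisms and normal forms\<close>

abbreviation ou :: "'a::field vec3 \<Rightarrow> 'a oct" where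
  "ou x \<equiv> Oct 0 x (0, 0, 0) 0"

abbreviation ov :: "'a::field vec3 \<Rightarrow> 'a oct" where
  "ov y \<equiv> Oct 0 (0, 0, 0) y 0"

lemma vscale_one [simp]: "vscale 1 u = u"
  by (cases u) simp

lemma vscale_zero [simp]: "vscale 0 u = (0, 0, 0)"
  by (cases u) simp

lemma vscale_vscale [simp]: "vscale c (vscale c' u) = vscale (c * c') u"
  by (cases u) (simp add: algebra_simps)

lemma vadd_zero_left [simp]: "vadd (0, 0, 0) v = v"
  and vadd_zero_right [simp]: "vadd v (0, 0, 0) = v"
  by (cases v; simp)+

lemma dot3_vscale_left [simp]: "dot3 (vscale c u) v = c * dot3 u v"
  and dot3_vscale_right [simp]: "dot3 u (vscale c v) = c * dot3 u v"
  by (cases u; cases v; simp add: algebra_simps)+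

lemma dot3_zero_left [simp]: "dot3 (0, 0, 0) u = 0"
  and dot3_zero_right [simp]: "dot3 u (0, 0, 0) = 0"
  by (cases u; simp)+

lemma cross3_vscale_self [simp]: "cross3 (vscale c u) u = (0, 0, 0)"
  by (cases u) (simp add: algebra_simps)

lemma cross3_zero_left [simp]: "cross3 (0, 0, 0) u = (0, 0, 0)"
  and cross3_zero_right [simp]: "cross3 u (0, 0, 0) = (0, 0, 0)"
  by (cases u; simp)+

lemma vadd_vscale_self: "vadd u (vscale c u) = vscale (1 + c) u"
  by (cases u) (simp add: algebra_simps)

lemma vscale_eq_zero_iff: "vscale c u = (0, 0, 0) \<longleftrightarrow> c = 0 \<or> u = (0, 0, 0)"
  by (cases u) auto

lemma parallel_if_cross3_eq_zero:
  assumes "x \<noteq> (0, 0, 0)" "cross3 x u = (0, 0, 0)"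
  shows "\<exists>c. u = vscale c x"
proof -
  obtain x1 x2 x3 u1 u2 u3 where xu: "x = (x1, x2, x3)" "u = (u1, u2, u3)"
    by (metis prod_cases3)
  have e: "x2 * u3 = x3 * u2" "x3 * u1 = x1 * u3" "x1 * u2 = x2 * u1"
    using assms(2) unfolding xu by auto
  consider "x1 \<noteq> 0" | "x2 \<noteq> 0" | "x3 \<noteq> 0"
    using assms(1) xu by auto
  then show ?thesis
  proof cases
    case 1
    show ?thesis by (rule exI[of _ "u1 / x1"]) (use 1 e in \<open>auto simp: xu field_simps\<close>)
  next
    case 2
    show ?thesis by (rule exI[of _ "u2 / x2"]) (use 2 e in \<open>auto simp: xu field_simps\<close>)
  next
    case 3
    show ?thesis by (rule exI[of _ "u3 / x3"]) (use 3 e in \<open>auto simp: xu field_simps\<close>)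
  qed
qed

fun oswap :: "'a::field oct \<Rightarrow> 'a oct" where
  "oswap (Oct a u v b) = Oct b (vscale (-1) v) (vscale (-1) u) a"

text \<open>\<open>oshear w\<close> is \<open>exp D\<close> for the nilpotent derivation
  \<open>D(\<alpha>, u, v, \<beta>) = (- w\<cdot>v, (\<alpha> - \<beta>) w, w \<times> u, w\<cdot>v)\<close>; the term \<open>D\<^sup>2/2 = (0, - (w\<cdot>v) w, 0, 0)\<close>
  needs no division, so the formula is valid in every characteristic.\<close>
fun oshear :: "'a::field vec3 \<Rightarrow> 'a oct \<Rightarrow> 'a oct" where
  "oshear w (Oct a u v b) =
     Oct (a - dot3 w v) (vadd u (vscale (a - b - dot3 w v) w)) (vadd v (cross3 w u)) (b + dot3 w v)"

lemma G2I:
  assumes "\<And>x. f (g x) = x" "\<And>x. g (f x) = x"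
    and "\<And>x y. f (x + y) = f x + f y" "\<And>c x. f (oscale c x) = oscale c (f x)"
    and "\<And>x y. f (omult x y) = omult (f x) (f y)"
  shows "f \<in> G2"
  using assms by (auto simp: G2_def oadd_eq_plus intro: bij_betw_byWitness)

lemma oswap_G2: "oswap \<in> G2"
proof (rule G2I)
  show "oswap (oswap x) = x" for x
    by (rule oct_coords_cases[of x]) simp
  then show "oswap (oswap x) = x" for x .
  show "oswap (x + y) = oswap x + oswap y" for x y
    by (rule oct_coords_cases[of x], rule oct_coords_cases[of y]) (simp add: algebra_simps)
  show "oswap (oscale c x) = oscale c (oswap x)" for c x
    by (rule oct_coords_cases[of x]) (simp add: algebra_simps)
  show "oswap (omult x y) = omult (oswap x) (oswap y)" for x y
    by (rule oct_coords_cases[of x], rule oct_coords_cases[of y]) (simp add: algebra_simps)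
qed

lemma oshear_G2: "oshear w \<in> G2"
proof (rule G2I)
  show "oshear w (oshear (vscale (-1) w) x) = x" "oshear (vscale (-1) w) (oshear w x) = x" for x
    by (cases w, rule oct_coords_cases[of x], simp add: algebra_simps)+
  show "oshear w (x + y) = oshear w x + oshear w y" for x y
    by (cases w, rule oct_coords_cases[of x], rule oct_coords_cases[of y]) (simp add: algebra_simps)
  show "oshear w (oscale c x) = oscale c (oshear w x)" for c x
    by (cases w, rule oct_coords_cases[of x]) (simp add: algebra_simps)
  show "oshear w (omult x y) = omult (oshear w x) (oshear w y)" for x y
    by (cases w, rule oct_coords_cases[of x], rule oct_coords_cases[of y]) (simp add: algebra_simps)
qed

type_synonym 'a mat3 = "'a vec3 \<times> 'a vec3 \<times> 'a vec3"

fun mat_vec :: "'a::field mat3 \<Rightarrow> 'a vec3 \<Rightarrow> 'a vec3" where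
  "mat_vec (r1, r2, r3) u = (dot3 r1 u, dot3 r2 u, dot3 r3 u)"

fun det3 :: "'a::field mat3 \<Rightarrow> 'a" where
  "det3 (r1, r2, r3) = dot3 r1 (cross3 r2 r3)"

fun cofactor3 :: "'a::field mat3 \<Rightarrow> 'a mat3" where
  "cofactor3 (r1, r2, r3) = (cross3 r2 r3, cross3 r3 r1, cross3 r1 r2)"

fun transpose3 :: "'a mat3 \<Rightarrow> 'a mat3" where
  "transpose3 ((a1, a2, a3), (b1, b2, b3), (c1, c2, c3)) = ((a1, b1, c1), (a2, b2, c2), (a3, b3, c3))"

text \<open>For \<open>det3 M = 1\<close>, \<open>cofactor3 M\<close> is the inverse transpose of \<open>M\<close>:
  \<open>SL\<^sub>3\<close> acts on the \<open>u\<close>-part naturally and on the \<open>v\<close>-part contragrediently.\<close>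
fun sl3_act :: "'a::field mat3 \<Rightarrow> 'a oct \<Rightarrow> 'a oct" where
  "sl3_act M (Oct a u v b) = Oct a (mat_vec M u) (mat_vec (cofactor3 M) v) b"

lemma mat3_cases: obtains a1 a2 a3 b1 b2 b3 c1 c2 c3 where "M = ((a1, a2, a3), (b1, b2, b3), (c1, c2, c3))"
  by (metis prod_cases3)

lemma mat_vec_zero [simp]: "mat_vec M (0, 0, 0) = (0, 0, 0)"
  by (rule mat3_cases[of M]) simp

lemma mat_vec_vadd: "mat_vec M (vadd u u') = vadd (mat_vec M u) (mat_vec M u')"
  by (rule mat3_cases[of M], cases u, cases u') (simp add: algebra_simps)

lemma mat_vec_vscale: "mat_vec M (vscale c u) = vscale c (mat_vec M u)"
  by (rule mat3_cases[of M], cases u) (simp add: algebra_simps)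

lemma dot3_mat_vec_cofactor3:
  "dot3 (mat_vec M u) (mat_vec (cofactor3 M) v) = det3 M * dot3 u v"
  "dot3 (mat_vec (cofactor3 M) v) (mat_vec M u) = det3 M * dot3 v u"
  by (rule mat3_cases[of M], cases u, cases v, simp add: algebra_simps)+

lemma cross3_mat_vec: "cross3 (mat_vec M u) (mat_vec M u') = mat_vec (cofactor3 M) (cross3 u u')"
  by (rule mat3_cases[of M], cases u, cases u') (simp add: algebra_simps)

lemma cofactor3_cofactor3: "mat_vec (cofactor3 (cofactor3 M)) w = vscale (det3 M) (mat_vec M w)"
  by (rule mat3_cases[of M], cases w) (simp add: algebra_simps)

lemma adjugate3_mat_vec:
  "mat_vec (transpose3 (cofactor3 M)) (mat_vec M u) = vscale (det3 M) u"
  "mat_vec M (mat_vec (transpose3 (cofactor3 M)) u) = vscale (det3 M) u"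
  by (rule mat3_cases[of M], cases u, simp add: algebra_simps)+

lemma adjugate3_mat_vec_cofactor3:
  "mat_vec (cofactor3 (transpose3 (cofactor3 M))) (mat_vec (cofactor3 M) v) = vscale (det3 M * det3 M) v"
  "mat_vec (cofactor3 M) (mat_vec (cofactor3 (transpose3 (cofactor3 M))) v) = vscale (det3 M * det3 M) v"
  by (rule mat3_cases[of M], cases v, simp add: algebra_simps)+

lemma sl3_act_G2:
  assumes "det3 M = 1"
  shows "sl3_act M \<in> G2"
proof (rule G2I)
  let ?N = "transpose3 (cofactor3 M)"
  show "sl3_act M (sl3_act ?N x) = x" "sl3_act ?N (sl3_act M x) = x" for x
    by (cases x; simp del: mat_vec.simps cofactor3.simps transpose3.simps
        add: adjugate3_mat_vec adjugate3_mat_vec_cofactor3 assms)+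
  show "sl3_act M (x + y) = sl3_act M x + sl3_act M y" for x y
    by (cases x, cases y) (simp del: mat_vec.simps cofactor3.simps add: mat_vec_vadd)
  show "sl3_act M (oscale c x) = oscale c (sl3_act M x)" for c x
    by (cases x) (simp del: mat_vec.simps cofactor3.simps add: mat_vec_vscale)
  show "sl3_act M (omult x y) = omult (sl3_act M x) (sl3_act M y)" for x y
    by (cases x, cases y) (simp del: mat_vec.simps cofactor3.simps
        add: mat_vec_vadd mat_vec_vscale dot3_mat_vec_cofactor3 cross3_mat_vec cofactor3_cofactor3 assms)
qed

lemma sl3_normalize:
  assumes "x \<noteq> (0, 0, 0)"
  shows "\<exists>M. det3 M = 1 \<and> mat_vec M x = (1, 0, 0)"
proof -
  obtain x1 x2 x3 where x: "x = (x1, x2, x3)"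
    by (metis prod_cases3)
  consider "x1 \<noteq> 0" | "x1 = 0" "x2 \<noteq> 0" | "x1 = 0" "x2 = 0" "x3 \<noteq> 0"
    using assms x by auto
  then show ?thesis
  proof cases
    case 1
    show ?thesis
      by (rule exI[of _ "((1 / x1, 0, 0), (- x2, x1, 0), (- x3 / x1, 0, 1))"]) (use 1 in \<open>simp add: x field_simps\<close>)
  next
    case 2
    show ?thesis
      by (rule exI[of _ "((0, 1 / x2, 0), (0, - x3, x2), (1, - x1 / x2, 0))"]) (use 2 in \<open>simp add: x field_simps\<close>)
  next
    case 3
    show ?thesis
      by (rule exI[of _ "((0, 0, 1 / x3), (x3, 0, - x1), (0, 1, - x2 / x3))"]) (use 3 in \<open>simp add: x field_simps\<close>)
  qed
qed

lemma G2_conj_ou: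
  assumes "x \<noteq> (0, 0, 0)"
  shows "\<exists>g\<in>G2. g (ou x) = ou (1, 0, 0)"
proof -
  obtain M where M: "det3 M = 1" "mat_vec M x = (1, 0, 0)"
    using sl3_normalize[OF assms] by blast
  then have "sl3_act M (ou x) = ou (1, 0, 0)"
    by simp
  then show ?thesis
    using sl3_act_G2[OF M(1)] by blast
qed

lemma oshear_clears_u_idempotent:
  assumes "otrace (Oct a u v b) = 1" "onorm (Oct a u v b) = 0"
  shows "\<exists>g\<in>G2. \<exists>a' b'. g (Oct a u v b) = Oct a' (0, 0, 0) v b'"
proof -
  define s where "s = (if a \<noteq> 0 then - 1 / a else 1 / b)"
  have "(1 + s * a) * (1 - s * b) = 0"
    using assms by (cases "a = 0") (simp_all add: s_def)
  then have "1 + (a - b - s * dot3 u v) * s = 0"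
    using assms by (simp add: algebra_simps)
  then have "oshear (vscale s u) (Oct a u v b) = Oct (a - s * dot3 u v) (0, 0, 0) v (b + s * dot3 u v)"
    by (simp del: vscale.simps add: vadd_vscale_self mult.commute)
  then show ?thesis
    using oshear_G2 by blast
qed

lemma G2_nontrivial_idempotent:
  "g \<in> G2 \<Longrightarrow> nontrivial_idempotent e \<Longrightarrow> nontrivial_idempotent (g e)"
  unfolding nontrivial_idempotent_def by (metis G2_mult G2_eq_zero_iff G2_oone G2_inj injD)

lemma diagonal_idempotent:
  assumes "nontrivial_idempotent (Oct a (0, 0, 0) (0, 0, 0) b)"
  shows "Oct a (0, 0, 0) (0, 0, 0) b = oe1 \<or> Oct a (0, 0, 0) (0, 0, 0) b = oe2"
proof -
  have "a + b = 1" "a * b = 0"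
    using assms by (simp_all add: nontrivial_idempotent_iff)
  then have "(a = 1 \<and> b = 0) \<or> (a = 0 \<and> b = 1)"
    by auto
  then show ?thesis
    by (auto simp: oe1_def oe2_def)
qed

lemma G2_conj_idempotent:
  assumes e: "nontrivial_idempotent e"
  shows "\<exists>g\<in>G2. g e = oe1"
proof -
  obtain a u v b where e_def: "e = Oct a u v b"
    by (cases e)
  obtain g1 a1 b1 where g1: "g1 \<in> G2" "g1 e = Oct a1 (0, 0, 0) v b1"
    using oshear_clears_u_idempotent[of a u v b] e by (auto simp: e_def nontrivial_idempotent_iff)
  let ?e1 = "oswap (g1 e)"
  have e1: "nontrivial_idempotent ?e1" "?e1 = Oct b1 (vscale (-1) v) (0, 0, 0) a1"
    using G2_nontrivial_idempotent[OF oswap_G2 G2_nontrivial_idempotent[OF g1(1) e]] g1(2) by simp_all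
  obtain g2 a2 b2 where g2: "g2 \<in> G2" "g2 ?e1 = Oct a2 (0, 0, 0) (0, 0, 0) b2"
    using oshear_clears_u_idempotent[of b1 "vscale (-1) v" "(0, 0, 0)" a1] e1
    by (auto simp: nontrivial_idempotent_iff)
  have "g2 ?e1 = oe1 \<or> g2 ?e1 = oe2"
    using diagonal_idempotent G2_nontrivial_idempotent[OF g2(1) e1(1)] g2(2) by metis
  moreover have "oswap oe2 = oe1"
    by (simp add: oe1_def oe2_def)
  ultimately have "(g2 \<circ> oswap \<circ> g1) e = oe1 \<or> (oswap \<circ> g2 \<circ> oswap \<circ> g1) e = oe1"
    by auto
  then show ?thesis
    using G2_comp g1(1) g2(1) oswap_G2 by metis
qed

lemma oshear_clears_square_zero:
  assumes "a \<noteq> 0" "otrace (Oct a u v b) = 0" "onorm (Oct a u v b) = 0"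
  shows "oshear (vscale (- 1 / a) u) (Oct a u v b) = ov v"
proof -
  have b: "b = - a"
    using assms(2) by (simp add: eq_neg_iff_add_eq_0 add.commute)
  then have "dot3 u v = - (a * a)"
    using assms(3) by simp
  with b show ?thesis
    using assms(1) by (simp del: vscale.simps add: vadd_vscale_self field_simps)
qed

lemma G2_conj_square_zero_alpha_ne_0:
  assumes "omult y y = 0" "y = Oct a u v b" "a \<noteq> 0"
  shows "\<exists>g\<in>G2. g y = ou (1, 0, 0)"
proof -
  let ?h = "oshear (vscale (- 1 / a) u)"
  have "otrace (Oct a u v b) = 0" "onorm (Oct a u v b) = 0"
    using assms(1,2) square_zero_iff by blast+
  then have "?h y = ov v"
    using assms(2,3) oshear_clears_square_zero by simp
  moreover have "y \<noteq> 0"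
    using assms(2,3) by (simp add: zero_oct_eq)
  then have "?h y \<noteq> 0"
    using G2_eq_zero_iff[OF oshear_G2, of _ y] by blast
  ultimately have "oswap (?h y) = ou (vscale (-1) v)" "vscale (-1) v \<noteq> (0, 0, 0)"
    by (auto simp: zero_oct_eq vscale_eq_zero_iff)
  then obtain g where "g \<in> G2" "g (oswap (?h y)) = ou (1, 0, 0)"
    using G2_conj_ou by metis
  then show ?thesis
    using G2_comp[OF G2_comp[OF _ oswap_G2] oshear_G2] by (metis comp_apply)
qed

lemma G2_conj_square_zero:
  assumes "omult y y = 0" "y \<noteq> 0"
  shows "\<exists>g\<in>G2. g y = ou (1, 0, 0)"
proof -
  obtain a u v b where y: "y = Oct a u v b"
    by (cases y)
  have "otrace (Oct a u v b) = 0" "onorm (Oct a u v b) = 0"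
    using assms(1) y square_zero_iff by blast+
  then have tn: "a + b = 0" "a * b = dot3 u v"
    by simp_all
  consider "a \<noteq> 0" | "a = 0" "v = (0, 0, 0)" | "a = 0" "v \<noteq> (0, 0, 0)"
    by blast
  then show ?thesis
  proof cases
    case 1
    then show ?thesis
      using G2_conj_square_zero_alpha_ne_0 assms y by blast
  next
    case 2
    then have "y = ou u" "u \<noteq> (0, 0, 0)"
      using assms(2) y tn by (auto simp: zero_oct_eq)
    then show ?thesis
      using G2_conj_ou by blast
  next
    case 3
    \<comment> \<open>A shear along any \<open>w\<close> with \<open>w\<cdot>v \<noteq> 0\<close> makes the \<open>\<alpha>\<close>-coordinate nonzero.\<close>
    obtain w :: "'a vec3" where w: "dot3 w v \<noteq> 0"
      using 3 by (cases v) (metis dot3.simps mult_1 mult_zero_left add_0 add.right_neutral)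
    obtain a' u' v' b' where y': "oshear w y = Oct a' u' v' b'"
      by (cases "oshear w y")
    have "a' \<noteq> 0"
      using y' w 3 by (auto simp: y)
    moreover have "omult (oshear w y) (oshear w y) = 0"
      using assms(1) by (metis G2_mult G2_zero oshear_G2)
    ultimately obtain g where "g \<in> G2" "g (oshear w y) = ou (1, 0, 0)"
      using G2_conj_square_zero_alpha_ne_0 y' by blast
    then show ?thesis
      using G2_comp[OF _ oshear_G2] by (metis comp_apply)
  qed
qed

section \<open>Closed orbits\<close>

lemma peval_poly_curve:
  assumes "\<And>k. \<exists>q. \<forall>t. X t k = poly q t"
  shows "\<exists>r. \<forall>t. peval p (X t) = poly r t"
proof (induction p)
  case (PConst c)
  show ?case
    by (intro exI[of _ "[:c:]"]) simp
next
  case (PVar i)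
  show ?case
    using assms by simp
next
  case (PAdd p1 p2)
  then obtain r1 r2 where "\<forall>t. peval p1 (X t) = poly r1 t" "\<forall>t. peval p2 (X t) = poly r2 t"
    by blast
  then show ?case
    by (intro exI[of _ "r1 + r2"]) simp
next
  case (PMul p1 p2)
  then obtain r1 r2 where "\<forall>t. peval p1 (X t) = poly r1 t" "\<forall>t. peval p2 (X t) = poly r2 t"
    by blast
  then show ?case
    by (intro exI[of _ "r1 * r2"]) simp
qed

lemma zariski_closed_curve_limit:
  fixes C :: "'a::field \<Rightarrow> 'a oct list"
  assumes S: "zariski_closed d S" and inf: "infinite (UNIV :: 'a set)"
    and C: "\<And>t. t \<noteq> 0 \<Longrightarrow> C t \<in> S"
    and poly: "\<And>k. \<exists>q. \<forall>t. tuple_coords (C t) k = poly q t"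
    and len: "length (C 0) = d"
  shows "C 0 \<in> S"
proof -
  obtain P where P: "S = {xs. length xs = d \<and> (\<forall>p\<in>P. peval p (tuple_coords xs) = 0)}"
    using S unfolding zariski_closed_def by blast
  have "peval p (tuple_coords (C 0)) = 0" if p: "p \<in> P" for p
  proof -
    obtain r where r: "\<And>t. peval p (tuple_coords (C t)) = poly r t"
      using peval_poly_curve[of "\<lambda>t. tuple_coords (C t)" p] poly by blast
    have "poly r t = 0" if "t \<noteq> 0" for t
      using C[OF that] P p r[of t, symmetric] by simp
    then have "UNIV - {0} \<subseteq> {t. poly r t = 0}"
      by blast
    then have "infinite {t. poly r t = 0}"
      using inf infinite_super by (metis finite_Diff2 finite.emptyI finite.insertI)
    then have "r = 0"
      using poly_roots_finite by blast
    then show ?thesis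
      using r by simp
  qed
  then show ?thesis
    using P len by simp
qed

definition closed_orbit :: "'a::field oct set \<Rightarrow> bool" where
  "closed_orbit B \<longleftrightarrow> (\<exists>as. is_basis as B \<and> zariski_closed (length as) (G2_orbit_tuple as))"

lemma G2_image_closed_orbit:
  assumes "g \<in> G2" "closed_orbit B"
  shows "closed_orbit (g ` B)"
proof -
  obtain as where "is_basis as B" "zariski_closed (length as) (G2_orbit_tuple as)"
    using assms(2) unfolding closed_orbit_def by blast
  then show ?thesis
    unfolding closed_orbit_def using G2_image_is_basis[OF assms(1)] G2_orbit_tuple_map[OF assms(1)]
    by (intro exI[of _ "map g as"]) simp
qed

lemma tuple_coords_map_poly:
  assumes "\<And>y k. \<exists>q. \<forall>t. ocoord (D t y) k = poly q t"
  shows "\<exists>q. \<forall>t. tuple_coords (map (D t) xs) k = poly q t"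
proof (cases "k < 8 * length xs")
  case True
  then show ?thesis
    using assms[of "xs ! (k div 8)" "k mod 8"] by (simp add: tuple_coords_def)
next
  case False
  then show ?thesis
    by (intro exI[of _ 0]) (simp add: tuple_coords_def)
qed

lemma zariski_closed_orbit_limit:
  fixes D :: "'a::field \<Rightarrow> 'a oct \<Rightarrow> 'a oct"
  assumes zc: "zariski_closed (length xs) (G2_orbit_tuple xs)" and inf: "infinite (UNIV :: 'a set)"
    and G2: "\<And>t. t \<noteq> 0 \<Longrightarrow> \<exists>h\<in>G2. \<forall>y\<in>set xs. h y = D t y"
    and poly: "\<And>y k. \<exists>q. \<forall>t. ocoord (D t y) k = poly q t"
  shows "map (D 0) xs \<in> G2_orbit_tuple xs"
proof (rule zariski_closed_curve_limit[OF zc inf])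
  fix t :: 'a assume "t \<noteq> 0"
  then obtain h where h: "h \<in> G2" "\<forall>y\<in>set xs. h y = D t y"
    using G2 by blast
  then have "map (D t) xs = map h xs"
    by simp
  then show "map (D t) xs \<in> G2_orbit_tuple xs"
    unfolding G2_orbit_tuple_def using h(1) by blast
qed (simp_all add: tuple_coords_map_poly[OF poly])

text \<open>A linear polynomial family that agrees with automorphisms for \<open>t \<noteq> 0\<close> maps a basis of \<open>B\<close>
  at \<open>t = 0\<close> into the closed orbit, hence to a basis again; so it cannot kill a vector of \<open>B\<close>.\<close>
lemma closed_orbit_no_degeneration:
  fixes D :: "'a::field \<Rightarrow> 'a oct \<Rightarrow> 'a oct"
  assumes closed: "closed_orbit B" and inf: "infinite (UNIV :: 'a set)"
    and G2: "\<And>t. t \<noteq> 0 \<Longrightarrow> \<exists>h\<in>G2. \<forall>y\<in>B. h y = D t y"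
    and lin: "\<And>t. module_hom oscale oscale (D t)"
    and poly: "\<And>y k. \<exists>q. \<forall>t. ocoord (D t y) k = poly q t"
    and x: "x \<in> B" "x \<noteq> 0" "D 0 x = 0"
  shows False
proof -
  obtain as where as: "lin_indep as" "B = span_list as" and zc: "zariski_closed (length as) (G2_orbit_tuple as)"
    using closed unfolding closed_orbit_def is_basis_def by blast
  have "map (D 0) as \<in> G2_orbit_tuple as"
  proof (rule zariski_closed_orbit_limit[OF zc inf _ poly])
    fix t :: 'a assume "t \<noteq> 0"
    then obtain h where "h \<in> G2" "\<forall>y\<in>B. h y = D t y"
      using G2 by blast
    moreover have "set as \<subseteq> B"
      using as(2) set_subset_span_list by blast
    ultimately show "\<exists>h\<in>G2. \<forall>y\<in>set as. h y = D t y"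
      by blast
  qed
  then obtain g where "g \<in> G2" "map (D 0) as = map g as"
    unfolding G2_orbit_tuple_def by blast
  then have indep: "lin_indep (map (D 0) as)"
    using G2_lin_indep[OF _ as(1)] by metis
  obtain cs where cs: "length cs = length as" "x = lin_comb cs as"
    using x(1) as(2) unfolding span_list_def by blast
  have "lin_comb cs (map (D 0) as) = 0"
    using x(3) module_hom_lin_comb[OF lin, of 0 cs as] cs(2) by simp
  then have "\<forall>c\<in>set cs. c = 0"
    using indep cs(1) unfolding lin_indep_def ozero_eq_zero by (metis length_map)
  then show False
    using x(2) cs(2) lin_comb_zero_coeffs by blast
qed

text \<open>The cocharacter \<open>t \<mapsto> diag(t\<^sup>2, t\<^sup>-\<^sup>1, t\<^sup>-\<^sup>1)\<close> of \<open>SL\<^sub>3\<close> has weights \<open>2, -1, -1\<close>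
  on \<open>u\<close>, \<open>-2, 1, 1\<close> on \<open>v\<close> and \<open>0\<close> on \<open>\<alpha>, \<beta>\<close>. On the span of the weight spaces of
  nonnegative weight (\<open>torus_bounded\<close>) it agrees with the polynomial family \<open>torus_limit\<close>.\<close>
definition torus :: "'a::field \<Rightarrow> 'a mat3" where
  "torus t = ((t * t, 0, 0), (0, 1 / t, 0), (0, 0, 1 / t))"

fun torus_limit :: "'a::field \<Rightarrow> 'a oct \<Rightarrow> 'a oct" where
  "torus_limit t (Oct a (u1, u2, u3) (v1, v2, v3) b) = Oct a (t * t * u1, 0, 0) (0, t * v2, t * v3) b"

fun torus_bounded :: "'a::field oct \<Rightarrow> bool" where
  "torus_bounded (Oct a (u1, u2, u3) (v1, v2, v3) b) \<longleftrightarrow> u2 = 0 \<and> u3 = 0 \<and> v1 = 0"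

lemma torus_G2: "t \<noteq> 0 \<Longrightarrow> sl3_act (torus t) \<in> G2"
  by (rule sl3_act_G2) (simp add: torus_def)

lemma torus_eq_torus_limit: "t \<noteq> 0 \<Longrightarrow> torus_bounded x \<Longrightarrow> sl3_act (torus t) x = torus_limit t x"
  by (rule oct_coords_cases[of x]) (simp add: torus_def)

lemma torus_limit_module_hom: "module_hom oscale oscale (torus_limit t)"
proof (rule oct_module_homI)
  show "torus_limit t (x + y) = torus_limit t x + torus_limit t y" for x y
    by (rule oct_coords_cases[of x], rule oct_coords_cases[of y]) (simp add: algebra_simps)
  show "torus_limit t (oscale c x) = oscale c (torus_limit t x)" for c x
    by (rule oct_coords_cases[of x]) (simp add: algebra_simps)
qed

lemma torus_limit_poly: "\<exists>q. \<forall>t. ocoord (torus_limit t x) k = poly q t"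
proof -
  obtain a u1 u2 u3 v1 v2 v3 b where x: "x = Oct a (u1, u2, u3) (v1, v2, v3) b"
    by (rule oct_coords_cases)
  show ?thesis
    by (rule exI[of _ "if k = 0 then [:a:] else if k = 1 then [:0, 0, u1:] else if k = 5 then [:0, v2:]
        else if k = 6 then [:0, v3:] else if k = 7 then [:b:] else 0"]) (simp add: x algebra_simps)
qed

lemma closed_orbit_not_contracted:
  fixes B :: "'a::field oct set"
  assumes "closed_orbit B" "infinite (UNIV :: 'a set)"
    and "\<forall>y\<in>B. torus_bounded y" "x \<in> B" "x \<noteq> 0" "torus_limit 0 x = 0"
  shows False
proof (rule closed_orbit_no_degeneration[OF assms(1,2)])
  show "\<exists>h\<in>G2. \<forall>y\<in>B. h y = torus_limit t y" if "t \<noteq> 0" for t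
    using torus_G2[OF that] torus_eq_torus_limit[OF that] assms(3) by blast
qed (use assms(4-6) torus_limit_module_hom torus_limit_poly in auto)

lemma subspace_torus_bounded: "oct.subspace {x :: 'a::field oct. torus_bounded x}"
  unfolding oct.subspace_def
proof (intro conjI ballI allI)
  show "0 \<in> {x :: 'a oct. torus_bounded x}"
    by (simp add: zero_oct_eq)
  show "x + y \<in> {x. torus_bounded x}" if "x \<in> {x. torus_bounded x}" "y \<in> {x. torus_bounded x}" for x y :: "'a oct"
    by (rule oct_coords_cases[of x], rule oct_coords_cases[of y]) (use that in simp)
  show "oscale c x \<in> {x. torus_bounded x}" if "x \<in> {x. torus_bounded x}" for c and x :: "'a oct"
    by (rule oct_coords_cases[of x]) (use that in simp)
qed

section \<open>Subalgebras of dimension at most three with a closed orbit\<close>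

lemma lin_indep3I:
  assumes "\<And>c1 c2 c3. oscale c1 x1 + oscale c2 x2 + oscale c3 x3 = 0 \<Longrightarrow> c1 = 0 \<and> c2 = 0 \<and> c3 = 0"
  shows "lin_indep [x1, x2, x3]"
  unfolding lin_indep_def ozero_eq_zero
proof (intro allI impI)
  fix cs :: "'a list" assume "length cs = length [x1, x2, x3] \<and> lin_comb cs [x1, x2, x3] = 0"
  then obtain c1 c2 c3 where "cs = [c1, c2, c3]" "lin_comb [c1, c2, c3] [x1, x2, x3] = 0"
    by (auto simp: length_Suc_conv numeral_eq_Suc)
  then show "\<forall>c\<in>set cs. c = 0"
    using assms by (simp add: add.assoc)
qed

lemma lin_indep4I:
  assumes "\<And>c1 c2 c3 c4. oscale c1 x1 + oscale c2 x2 + oscale c3 x3 + oscale c4 x4 = 0 \<Longrightarrow>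
    c1 = 0 \<and> c2 = 0 \<and> c3 = 0 \<and> c4 = 0"
  shows "lin_indep [x1, x2, x3, x4]"
  unfolding lin_indep_def ozero_eq_zero
proof (intro allI impI)
  fix cs :: "'a list" assume "length cs = length [x1, x2, x3, x4] \<and> lin_comb cs [x1, x2, x3, x4] = 0"
  then obtain c1 c2 c3 c4 where "cs = [c1, c2, c3, c4]" "lin_comb [c1, c2, c3, c4] [x1, x2, x3, x4] = 0"
    by (auto simp: length_Suc_conv numeral_eq_Suc)
  then show "\<forall>c\<in>set cs. c = 0"
    using assms by (simp add: add.assoc)
qed

lemma lin_indep_oone: "lin_indep [oone :: 'a::field oct]"
  by (auto simp: lin_indep_def length_Suc_conv oone_def zero_oct_eq ozero_def)

lemma lin_indep_e1: "lin_indep [oe1 :: 'a::field oct]"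
  by (auto simp: lin_indep_def length_Suc_conv oe1_def zero_oct_eq ozero_def)

lemma lin_indep_e1_e2: "lin_indep [oe1, oe2 :: 'a::field oct]"
  by (auto simp: lin_indep_def length_Suc_conv oe1_def oe2_def zero_oct_eq ozero_def)

lemma lin_indep_e1_ou_ou_ov:
  assumes "cross3 x u \<noteq> (0, 0, 0)"
  shows "lin_indep [oe1, ou x, ou u, ov (cross3 x u)]"
proof (rule lin_indep4I)
  fix c1 c2 c3 c4 :: 'a
  assume "oscale c1 oe1 + oscale c2 (ou x) + oscale c3 (ou u) + oscale c4 (ov (cross3 x u)) = 0"
  then have c: "c1 = 0" "vadd (vscale c2 x) (vscale c3 u) = (0, 0, 0)" "vscale c4 (cross3 x u) = (0, 0, 0)"
    by (simp_all add: oe1_def zero_oct_eq)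
  have "vscale c2 (cross3 x u) = cross3 (vadd (vscale c2 x) (vscale c3 u)) u"
    "vscale c3 (cross3 x u) = cross3 x (vadd (vscale c2 x) (vscale c3 u))"
    by (cases x; cases u; simp add: algebra_simps)+
  then show "c1 = 0 \<and> c2 = 0 \<and> c3 = 0 \<and> c4 = 0"
    using c assms by (auto simp: vscale_eq_zero_iff)
qed

lemma lin_indep_e1_e2_ou_ov:
  assumes "x \<noteq> (0, 0, 0)" "v \<noteq> (0, 0, 0)"
  shows "lin_indep [oe1, oe2, ou x, ov v]"
proof (rule lin_indep4I)
  fix c1 c2 c3 c4 :: 'a
  assume "oscale c1 oe1 + oscale c2 oe2 + oscale c3 (ou x) + oscale c4 (ov v) = 0"
  then have "c1 = 0" "c2 = 0" "vscale c3 x = (0, 0, 0)" "vscale c4 v = (0, 0, 0)"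
    by (simp_all add: oe1_def oe2_def zero_oct_eq)
  then show "c1 = 0 \<and> c2 = 0 \<and> c3 = 0 \<and> c4 = 0"
    using assms by (simp add: vscale_eq_zero_iff)
qed

lemma lin_indep_oone_ou1_pair:
  assumes "(u2, u3) \<noteq> (0, 0)"
  shows "lin_indep [oone, ou (1, 0, 0), Oct 0 (0, u2, u3) (0, v2, v3) c, Oct 0 (c, 0, 0) (0, - u3, u2) (0 :: 'a::field)]"
proof (rule lin_indep4I)
  fix c1 c2 c3 c4 :: 'a
  assume "oscale c1 oone + oscale c2 (ou (1, 0, 0)) + oscale c3 (Oct 0 (0, u2, u3) (0, v2, v3) c)
    + oscale c4 (Oct 0 (c, 0, 0) (0, - u3, u2) 0) = 0"
  then have e: "c1 = 0" "c2 + c4 * c = 0" "c3 * u2 = 0" "c3 * u3 = 0" "c3 * v2 - c4 * u3 = 0"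
      "c3 * v3 + c4 * u2 = 0"
    by (simp_all add: oone_def zero_oct_eq algebra_simps)
  have "c3 = 0"
    using e(3,4) assms by auto
  then have "c4 = 0"
    using e(5,6) assms by auto
  then show "c1 = 0 \<and> c2 = 0 \<and> c3 = 0 \<and> c4 = 0"
    using e \<open>c3 = 0\<close> by simp
qed

lemma subalgebra_peirce_components:
  assumes C: "subalgebra C" and e1: "oe1 \<in> C" and x: "Oct a u v b \<in> C"
  shows "ou u \<in> C" "ov v \<in> C" "Oct a (0, 0, 0) (0, 0, 0) 0 \<in> C" "Oct 0 (0, 0, 0) (0, 0, 0) b \<in> C"
proof -
  have left: "omult oe1 (Oct a u v b) = Oct a u (0, 0, 0) 0"
    and right: "omult (Oct a u v b) oe1 = Oct a (0, 0, 0) v 0"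
    and both: "omult (Oct a u (0, 0, 0) 0) oe1 = Oct a (0, 0, 0) (0, 0, 0) 0"
    by (cases u; cases v; simp add: oe1_def)+
  have lC: "Oct a u (0, 0, 0) 0 \<in> C" and rC: "Oct a (0, 0, 0) v 0 \<in> C"
    using subalgebra_mult[OF C] e1 x left right by metis+
  show aC: "Oct a (0, 0, 0) (0, 0, 0) 0 \<in> C"
    using subalgebra_mult[OF C lC e1] both by simp
  show "ou u \<in> C"
    using subalgebra_diff[OF C lC aC] by simp
  show vC: "ov v \<in> C"
    using subalgebra_diff[OF C rC aC] by simp
  show "Oct 0 (0, 0, 0) (0, 0, 0) b \<in> C"
    using subalgebra_diff[OF C subalgebra_diff[OF C x lC] vC] by (cases u; cases v; simp)
qed

lemma no_idempotent_trace_zero: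
  assumes ac: "alg_closed TYPE('a::field)" and ch: "CHAR('a) = 2"
    and B: "subalgebra B" "oone \<in> B" "\<forall>e\<in>B. \<not> nontrivial_idempotent e" and x: "(x :: 'a oct) \<in> B"
  shows "otrace x = 0"
proof (rule ccontr)
  assume t: "otrace x \<noteq> 0"
  obtain s where s: "s * s + (- otrace x) * s + onorm x = 0"
    using alg_closed_quadratic_root[OF ac] by blast
  let ?y = "x - oscale s oone"
  have yB: "?y \<in> B"
    using subalgebra_diff[OF B(1) x subalgebra_scale[OF B(1) B(2)]] .
  have "otrace ?y = otrace x" "onorm ?y = 0"
    using s char2_two[OF ch] by (simp_all add: otrace_diff_scalar onorm_diff_scalar algebra_simps)
  then have "nontrivial_idempotent (oscale (1 / otrace ?y) ?y)"
    using t by (intro nontrivial_idempotent_normalize) simp_all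
  then show False
    using B(3) subalgebra_scale[OF B(1) yB] by blast
qed

lemma no_idempotent_square_zero:
  assumes B: "subalgebra B" "oone \<notin> B" "\<forall>e\<in>B. \<not> nontrivial_idempotent e" and x: "x \<in> B"
  shows "omult x x = 0"
proof -
  have "oscale (otrace x) x - omult x x \<in> B"
    using B(1) x by (intro subalgebra_diff subalgebra_scale subalgebra_mult)
  then have "oscale (onorm x) oone \<in> B"
    by (simp add: omult_self)
  then have n: "onorm x = 0"
    using B(1,2) subalgebra_scale[of B "oscale (onorm x) oone" "1 / onorm x"] by (cases "onorm x = 0") auto
  have "otrace x = 0"
  proof (rule ccontr)
    assume "otrace x \<noteq> 0"
    then have "nontrivial_idempotent (oscale (1 / otrace x) x)"
      using n by (rule nontrivial_idempotent_normalize[rotated])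
    then show False
      using B(3) subalgebra_scale[OF B(1) x] by blast
  qed
  then show ?thesis
    using n by (simp add: square_zero_iff)
qed

lemma G2_image_no_idempotent:
  assumes "g \<in> G2" "\<forall>e\<in>B. \<not> nontrivial_idempotent e"
  shows "\<forall>e\<in>g ` B. \<not> nontrivial_idempotent e"
proof
  fix e assume "e \<in> g ` B"
  then obtain x where "x \<in> B" "e = g x"
    by blast
  then show "\<not> nontrivial_idempotent e"
    using assms(2) G2_nontrivial_idempotent[OF G2_inv[OF assms(1)], of e] G2_inj[OF assms(1)] by auto
qed

lemma G2_image_square_zero:
  "g \<in> G2 \<Longrightarrow> \<forall>x\<in>B. omult x x = 0 \<Longrightarrow> \<forall>x\<in>g ` B. omult x x = 0"
  by (auto simp: G2_mult[symmetric] G2_zero)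

lemma square_zero_subalgebra_v1_eq_0:
  assumes C: "subalgebra C" "ou (1, 0, 0) \<in> C" "\<forall>x\<in>C. omult x x = 0"
    and w: "Oct a (u1, u2, u3) (v1, v2, v3) b \<in> C"
  shows "v1 = 0"
proof -
  have "Oct a (u1, u2, u3) (v1, v2, v3) b + ou (1, 0, 0) \<in> C"
    using subalgebra_add[OF C(1) w C(2)] .
  then have "onorm (Oct a (u1 + 1, u2, u3) (v1, v2, v3) b) = 0"
    using C(3) square_zero_iff by fastforce
  moreover have "onorm (Oct a (u1, u2, u3) (v1, v2, v3) b) = 0"
    using C(3) w square_zero_iff by blast
  ultimately show ?thesis
    by (simp add: algebra_simps)
qed

lemma sl3_normalize_u23:
  assumes "(u2, u3) \<noteq> (0, 0)"
  shows "\<exists>M v2' v3'. det3 M = 1 \<and> sl3_act M (ou (1, 0, 0)) = ou (1, 0, 0)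
    \<and> sl3_act M (Oct a (0, u2, u3) (0, v2, v3) b) = Oct a (0, 1, 0) (0, v2', v3') b"
proof -
  obtain p q where pq: "p * u2 + q * u3 = 1"
  proof (cases "u2 = 0")
    case True
    then show ?thesis
      using assms that[of 0 "1 / u3"] by simp
  next
    case False
    then show ?thesis
      using that[of "1 / u2" 0] by simp
  qed
  show ?thesis
    by (intro exI[of _ "((1, 0, 0), (0, p, q), (0, - u3, u2))"] exI[of _ "u2 * v2 + u3 * v3"]
        exI[of _ "p * v3 - q * v2"]) (use pq in \<open>simp add: algebra_simps\<close>)
qed

lemma torus_bounded_sl3_act:
  assumes "det3 M = 1" "mat_vec M x = (1, 0, 0)" "u = vscale c x" "dot3 x v = 0"
  shows "torus_bounded (sl3_act M (Oct a u v b))"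
proof -
  obtain p q r where pqr: "mat_vec (cofactor3 M) v = (p, q, r)"
    by (metis prod_cases3)
  have "p = dot3 (mat_vec M x) (mat_vec (cofactor3 M) v)"
    using assms(2) pqr by simp
  then have "p = 0"
    using assms(1,4) by (simp add: dot3_mat_vec_cofactor3)
  moreover have "mat_vec M u = (c, 0, 0)"
    using assms(2,3) by (simp add: mat_vec_vscale)
  ultimately show ?thesis
    using pqr by simp
qed

lemma ou1_contracted: "ou (1, 0, 0) \<noteq> 0" "torus_limit 0 (ou (1, 0, 0)) = 0"
  by (simp_all add: zero_oct_eq)

locale small_closed_subalgebra =
  fixes B :: "'a::field oct set" and d :: nat
  assumes subalgebra: "subalgebra B"
    and has_dim: "has_dim B d"
    and dim_le_3: "d \<le> 3"
    and closed_orbit: "closed_orbit B"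
    and infinite_field: "infinite (UNIV :: 'a set)"

lemma small_closed_subalgebra_image:
  assumes "small_closed_subalgebra B d" "g \<in> G2"
  shows "small_closed_subalgebra (g ` B) d"
  using assms G2_image_subalgebra G2_image_has_dim G2_image_closed_orbit
  unfolding small_closed_subalgebra_def by blast

context small_closed_subalgebra
begin

lemmas scale_mem = subalgebra_scale[OF subalgebra]
  and diff_mem = subalgebra_diff[OF subalgebra]
  and mult_mem = subalgebra_mult[OF subalgebra]

lemma lin_indep_length_le_3: "lin_indep zs \<Longrightarrow> set zs \<subseteq> B \<Longrightarrow> length zs \<le> 3"
  using lin_indep_length_le_dim[OF has_dim] dim_le_3 by fastforce

lemma basis_of_spanning_lin_indep:
  assumes "lin_indep zs" "set zs \<subseteq> B" "B \<subseteq> span_list zs"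
  shows "d = length zs" "B = span_list zs"
proof -
  have "span_list zs \<subseteq> B"
    using span_list_subset[OF subalgebra_subspace[OF subalgebra] assms(2)] .
  then show "B = span_list zs"
    using assms(3) by blast
  then show "d = length zs"
    using has_dim_basis_length[OF has_dim] assms(1) unfolding is_basis_def by simp
qed

lemma not_contracted: "\<forall>y\<in>B. torus_bounded y \<Longrightarrow> x \<in> B \<Longrightarrow> x \<noteq> 0 \<Longrightarrow> torus_limit 0 x = 0 \<Longrightarrow> False"
  using closed_orbit_not_contracted[OF closed_orbit infinite_field] by blast

lemma not_contains_ou1_ov2_ov3:
  assumes "ou (1, 0, 0) \<in> B" "ov (0, 1, 0) \<in> B" "ov (0, 0, 1) \<in> B"
  shows False
proof -
  let ?zs = "[ou (1, 0, 0), ov (0, 1, 0), ov (0, 0, 1)] :: 'a oct list"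
  have "lin_indep ?zs"
    by (rule lin_indep3I) (simp add: zero_oct_eq)
  then have "B \<subseteq> span_list ?zs"
    using has_dim_subset_span_list[OF has_dim] assms dim_le_3 by simp
  also have "\<dots> \<subseteq> {x. torus_bounded x}"
    by (rule span_list_subset[OF subspace_torus_bounded]) simp
  finally show False
    using not_contracted assms(1) ou1_contracted by blast
qed

lemma not_contains_ou1_ou2_ov3:
  assumes "ou (1, 0, 0) \<in> B" "ou (0, 1, 0) \<in> B" "ov (0, 0, 1) \<in> B"
  shows False
proof -
  \<comment> \<open>The swap followed by a signed permutation moves this triple to the one above, up to signs.\<close>
  define g :: "'a oct \<Rightarrow> 'a oct" where "g = sl3_act ((0, 0, 1), (0, -1, 0), (1, 0, 0)) \<circ> oswap"
  have g: "g \<in> G2"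
    unfolding g_def by (intro G2_comp sl3_act_G2 oswap_G2) simp
  interpret gB: small_closed_subalgebra "g ` B" d
    by (rule small_closed_subalgebra_image[OF small_closed_subalgebra_axioms g])
  have "g (ou (1, 0, 0)) = oscale (-1) (ov (0, 0, 1))" "g (ou (0, 1, 0)) = ov (0, 1, 0)"
    "g (ov (0, 0, 1)) = oscale (-1) (ou (1, 0, 0))"
    by (simp_all add: g_def)
  then have "oscale (-1) (ov (0, 0, 1)) \<in> g ` B" "ov (0, 1, 0) \<in> g ` B" "oscale (-1) (ou (1, 0, 0)) \<in> g ` B"
    using assms by (metis imageI)+
  then have "oscale (-1) (oscale (-1) (ov (0, 0, 1))) \<in> g ` B" "ov (0, 1, 0) \<in> g ` B"
    "oscale (-1) (oscale (-1) (ou (1, 0, 0))) \<in> g ` B"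
    using gB.scale_mem by blast+
  then show False
    using gB.not_contains_ou1_ov2_ov3 by simp
qed

lemma e1_ou_mem_constraints:
  assumes e1: "oe1 \<in> B" and x: "ou x \<in> B" and z: "Oct a u v b \<in> B"
  shows "cross3 x u = (0, 0, 0)" "dot3 x v = 0"
proof (rule ccontr)
  assume ne: "cross3 x u \<noteq> (0, 0, 0)"
  have uB: "ou u \<in> B"
    using subalgebra_peirce_components[OF subalgebra e1 z] by blast
  have "omult (ou x) (ou u) = ov (cross3 x u)"
    by (cases x; cases u; simp)
  then have "ov (cross3 x u) \<in> B"
    using mult_mem[OF x uB] by (simp only:)
  then have "set [oe1, ou x, ou u, ov (cross3 x u)] \<subseteq> B"
    using e1 x uB by simp
  then show False
    using lin_indep_length_le_3[OF lin_indep_e1_ou_ou_ov[OF ne]] by simp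
next
  show "dot3 x v = 0"
  proof (rule ccontr)
    assume xv: "dot3 x v \<noteq> 0"
    have vB: "ov v \<in> B"
      using subalgebra_peirce_components[OF subalgebra e1 z] by blast
    have "omult (ov v) (ou x) = oscale (dot3 x v) oe2"
      by (cases x; cases v; simp add: oe2_def algebra_simps)
    then have "oscale (dot3 x v) oe2 \<in> B"
      using mult_mem[OF vB x] by (simp only:)
    then have "oscale (1 / dot3 x v) (oscale (dot3 x v) oe2) \<in> B"
      by (rule scale_mem)
    then have "set [oe1, oe2, ou x, ov v] \<subseteq> B"
      using xv e1 x vB by simp
    moreover have "x \<noteq> (0, 0, 0)" "v \<noteq> (0, 0, 0)"
      using xv by (cases x; cases v; auto)+
    ultimately have "length [oe1, oe2, ou x, ov v] \<le> 3"
      using lin_indep_length_le_3 lin_indep_e1_e2_ou_ov by blast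
    then show False
      by simp
  qed
qed

lemma e1_mem_no_ou:
  assumes e1: "oe1 \<in> B" and x: "ou x \<in> B" "x \<noteq> (0, 0, 0)"
  shows False
proof -
  obtain M where M: "det3 M = 1" "mat_vec M x = (1, 0, 0)"
    using sl3_normalize[OF x(2)] by blast
  interpret gB: small_closed_subalgebra "sl3_act M ` B" d
    by (rule small_closed_subalgebra_image[OF small_closed_subalgebra_axioms sl3_act_G2[OF M(1)]])
  have "torus_bounded (sl3_act M z)" if zB: "z \<in> B" for z
  proof (cases z)
    case (Oct a u v b)
    then have zB': "Oct a u v b \<in> B"
      using zB by simp
    obtain c where "u = vscale c x"
      using parallel_if_cross3_eq_zero[OF x(2) e1_ou_mem_constraints(1)[OF e1 x(1) zB']] by blast
    then show ?thesis
      using torus_bounded_sl3_act[OF M _ e1_ou_mem_constraints(2)[OF e1 x(1) zB']] Oct by simp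
  qed
  moreover have "sl3_act M (ou x) = ou (1, 0, 0)"
    using M(2) by simp
  ultimately show False
    using gB.not_contracted[OF _ _ ou1_contracted] x(1) by (metis imageE imageI)
qed

lemma e1_ov_mem_parallel:
  assumes e1: "oe1 \<in> B" and y: "ov y \<in> B"
    and no_u: "\<forall>a u v b. Oct a u v b \<in> B \<longrightarrow> u = (0, 0, 0)" and z: "Oct a u v b \<in> B"
  shows "cross3 y v = (0, 0, 0)"
proof -
  have vB: "ov v \<in> B"
    using subalgebra_peirce_components[OF subalgebra e1 z] by blast
  have "omult (ov v) (ov y) = ou (vscale (-1) (cross3 v y))"
    by (cases v; cases y; simp)
  then have "ou (vscale (-1) (cross3 v y)) \<in> B"
    using mult_mem[OF vB y] by (simp only:)
  then have "vscale (-1) (cross3 v y) = (0, 0, 0)"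
    using no_u by blast
  then show ?thesis
    by (cases v; cases y; simp add: algebra_simps)
qed

lemma e1_mem_no_ov:
  assumes e1: "oe1 \<in> B" and y: "ov y \<in> B" "y \<noteq> (0, 0, 0)"
    and no_u: "\<forall>a u v b. Oct a u v b \<in> B \<longrightarrow> u = (0, 0, 0)"
  shows False
proof -
  have parallel: "cross3 y v = (0, 0, 0)" if "Oct a u v b \<in> B" for a u v b
    using e1_ov_mem_parallel[OF e1 y(1) no_u that] .
  obtain M where M: "det3 M = 1" "mat_vec M y = (1, 0, 0)"
    using sl3_normalize[OF y(2)] by blast
  let ?g = "sl3_act M \<circ> oswap"
  interpret gB: small_closed_subalgebra "?g ` B" d
    by (rule small_closed_subalgebra_image[OF small_closed_subalgebra_axioms G2_comp[OF sl3_act_G2[OF M(1)] oswap_G2]])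
  have "torus_bounded (?g z)" if zB: "z \<in> B" for z
  proof (cases z)
    case (Oct a u v b)
    then obtain c where "v = vscale c y"
      using parallel_if_cross3_eq_zero[OF y(2) parallel] zB by blast
    moreover have "u = (0, 0, 0)"
      using no_u zB Oct by blast
    ultimately have "oswap z = Oct b (vscale (- c) y) (0, 0, 0) a"
      using Oct by simp
    then show ?thesis
      using torus_bounded_sl3_act[OF M, of "vscale (- c) y" "- c" "(0, 0, 0)" b a] by simp
  qed
  moreover have "?g (ov y) = oscale (-1) (ou (1, 0, 0))"
    using M(2) by (simp add: mat_vec_vscale)
  moreover have "oscale (-1) (ou (1, 0, 0)) \<noteq> (0 :: 'a oct)" "torus_limit 0 (oscale (-1) (ou (1, 0, 0))) = 0"
    by (simp_all add: zero_oct_eq)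
  ultimately show False
    using gB.not_contracted y(1) by (metis imageE imageI)
qed

lemma diagonal_subset_span_e1_e2:
  assumes diagonal: "\<forall>a u v b. Oct a u v b \<in> B \<longrightarrow> u = (0, 0, 0) \<and> v = (0, 0, 0)"
  shows "B \<subseteq> span_list [oe1, oe2]"
proof
  fix z assume zB: "z \<in> B"
  obtain a u v b where z: "z = Oct a u v b"
    by (cases z)
  then have "u = (0, 0, 0)" "v = (0, 0, 0)"
    using diagonal zB by blast+
  then have "z = oscale a oe1 + oscale b oe2"
    using z by (simp add: oe1_def oe2_def)
  then show "z \<in> span_list [oe1, oe2]"
    by (simp add: span_list_eq_span oct.span_add oct.span_scale oct.span_base)
qed

lemma e1_mem_diagonal:
  assumes e1: "oe1 \<in> B" and diagonal: "\<forall>a u v b. Oct a u v b \<in> B \<longrightarrow> u = (0, 0, 0) \<and> v = (0, 0, 0)"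
  shows "(d = 1 \<and> B = span_list [oe1]) \<or> (d = 2 \<and> B = span_list [oe1, oe2])"
proof (cases "oe2 \<in> B")
  case True
  then show ?thesis
    using basis_of_spanning_lin_indep[OF lin_indep_e1_e2] diagonal_subset_span_e1_e2[OF diagonal] e1
    by simp
next
  case False
  have "B \<subseteq> span_list [oe1]"
  proof
    fix z assume zB: "z \<in> B"
    then obtain c1 c2 where z: "z = oscale c1 oe1 + oscale c2 oe2"
      using diagonal_subset_span_e1_e2[OF diagonal] by (auto simp: span_list_def length_Suc_conv)
    have "c2 = 0"
    proof (rule ccontr)
      assume "c2 \<noteq> 0"
      have "Oct 0 (0, 0, 0) (0, 0, 0) c2 \<in> B"
        using subalgebra_peirce_components(4)[OF subalgebra e1, of c1 "(0, 0, 0)" "(0, 0, 0)" c2] zB z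
        by (simp add: oe1_def oe2_def)
      then have "oscale (1 / c2) (Oct 0 (0, 0, 0) (0, 0, 0) c2) \<in> B"
        by (rule scale_mem)
      then show False
        using False \<open>c2 \<noteq> 0\<close> by (simp add: oe2_def)
    qed
    then show "z \<in> span_list [oe1]"
      using z by (simp add: span_list_eq_span oct.span_scale oct.span_base)
  qed
  then show ?thesis
    using basis_of_spanning_lin_indep[OF lin_indep_e1] e1 by simp
qed

lemma e1_mem_cases:
  assumes "oe1 \<in> B"
  shows "(d = 1 \<and> B = span_list [oe1]) \<or> (d = 2 \<and> B = span_list [oe1, oe2])"
proof -
  consider (u) a u v b where "Oct a u v b \<in> B" "u \<noteq> (0, 0, 0)"
    | (v) a u v b where "\<forall>a u v b. Oct a u v b \<in> B \<longrightarrow> u = (0, 0, 0)" "Oct a u v b \<in> B" "v \<noteq> (0, 0, 0)"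
    | (diagonal) "\<forall>a u v b. Oct a u v b \<in> B \<longrightarrow> u = (0, 0, 0) \<and> v = (0, 0, 0)"
    by blast
  then show ?thesis
  proof cases
    case u
    then show ?thesis
      using e1_mem_no_ou[OF assms] subalgebra_peirce_components[OF subalgebra assms] by blast
  next
    case v
    then show ?thesis
      using e1_mem_no_ov[OF assms] subalgebra_peirce_components[OF subalgebra assms] by blast
  next
    case diagonal
    then show ?thesis
      by (rule e1_mem_diagonal[OF assms])
  qed
qed

lemma trace_zero_not_contains_oone_ou1:
  assumes one: "oone \<in> B" and U1: "ou (1, 0, 0) \<in> B" and trace: "\<forall>x\<in>B. otrace x = 0"
  shows False
proof -
  have "torus_bounded w" if w: "w \<in> B" for w
  proof (rule oct_coords_cases[of w])
    fix a u1 u2 u3 v1 v2 v3 b assume w_def: "w = Oct a (u1, u2, u3) (v1, v2, v3) b"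
    have "omult (ou (1, 0, 0)) w = Oct v1 (b, 0, 0) (0, - u3, u2) 0"
      by (simp add: w_def)
    then have v1: "v1 = 0"
      using trace mult_mem[OF U1 w] by force
    define z where "z = w - oscale a oone - oscale u1 (ou (1, 0, 0))"
    have zB: "z \<in> B"
      unfolding z_def using w one U1 by (intro diff_mem scale_mem)
    have z: "z = Oct 0 (0, u2, u3) (0, v2, v3) (b - a)"
      by (simp add: z_def w_def v1 oone_def)
    have "omult (ou (1, 0, 0)) z = Oct 0 (b - a, 0, 0) (0, - u3, u2) 0"
      by (simp add: z)
    then have "Oct 0 (b - a, 0, 0) (0, - u3, u2) 0 \<in> B"
      using mult_mem[OF U1 zB] by (simp only:)
    then have "(u2, u3) = (0, 0)"
      using lin_indep_length_le_3[OF lin_indep_oone_ou1_pair] one U1 zB z by fastforce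
    then show "torus_bounded w"
      by (simp add: w_def v1)
  qed
  then show False
    using not_contracted U1 ou1_contracted by blast
qed

lemma oone_mem_no_idempotent_dim_le_1:
  assumes ac: "alg_closed TYPE('a)" and ch: "CHAR('a) = 2"
    and one: "oone \<in> B" and no_idem: "\<forall>e\<in>B. \<not> nontrivial_idempotent e"
  shows "d \<le> 1"
proof (rule ccontr)
  assume "\<not> d \<le> 1"
  then obtain z where z: "z \<in> B" "z \<notin> span_list [oone]"
    using has_dim_le_length[OF has_dim, of "[oone]"] by fastforce
  have t: "otrace z = 0"
    by (rule no_idempotent_trace_zero[OF ac ch subalgebra one no_idem z(1)])
  obtain r where r: "r * r + 0 * r + - onorm z = 0"
    using alg_closed_quadratic_root[OF ac] by blast
  \<comment> \<open>In characteristic 2, subtracting a square root of the norm leaves trace and norm zero.\<close>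
  let ?y = "z - oscale r oone"
  have "otrace ?y = 0" "onorm ?y = 0"
    using t r char2_two[OF ch] char2_add_self[OF ch, of "onorm z"]
    by (simp_all add: otrace_diff_scalar onorm_diff_scalar algebra_simps)
  then have "omult ?y ?y = 0"
    by (simp add: square_zero_iff)
  moreover have "?y \<noteq> 0"
    using z(2) by (auto simp: span_list_eq_span oct.span_scale oct.span_base)
  ultimately obtain g where g: "g \<in> G2" "g ?y = ou (1, 0, 0)"
    using G2_conj_square_zero by blast
  interpret gB: small_closed_subalgebra "g ` B" d
    by (rule small_closed_subalgebra_image[OF small_closed_subalgebra_axioms g(1)])
  have "?y \<in> B"
    using z(1) one by (intro diff_mem scale_mem)
  then have "ou (1, 0, 0) \<in> g ` B"
    using g(2) by (metis imageI)
  moreover have "oone \<in> g ` B"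
    using one G2_oone[OF g(1)] by (metis imageI)
  moreover have "\<forall>x\<in>g ` B. otrace x = 0"
    using no_idempotent_trace_zero[OF ac ch gB.subalgebra \<open>oone \<in> g ` B\<close>
        G2_image_no_idempotent[OF g(1) no_idem]] by blast
  ultimately show False
    using gB.trace_zero_not_contains_oone_ou1 by blast
qed

lemma not_contains_ou1_ov3_nilpotent_u2:
  assumes U1: "ou (1, 0, 0) \<in> B" and V3: "ov (0, 0, 1) \<in> B"
    and q: "Oct a (0, 1, 0) (0, - (a * a), 0) (- a) \<in> B" and a: "a \<noteq> 0"
  shows False
proof -
  \<comment> \<open>This shear moves \<open>q\<close> onto the \<open>ov (0, 1, 0)\<close> axis and fixes \<open>ou (1, 0, 0)\<close> modulo \<open>ov (0, 0, 1)\<close>.\<close>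
  let ?g = "oshear (0, - 1 / a, 0)"
  interpret gB: small_closed_subalgebra "?g ` B" d
    by (rule small_closed_subalgebra_image[OF small_closed_subalgebra_axioms oshear_G2])
  have "?g (ou (1, 0, 0)) = ou (1, 0, 0) + oscale (1 / a) (ov (0, 0, 1))" "?g (ov (0, 0, 1)) = ov (0, 0, 1)"
    "?g (Oct a (0, 1, 0) (0, - (a * a), 0) (- a)) = oscale (- (a * a)) (ov (0, 1, 0))"
    using a by (simp_all add: field_simps)
  then have "ou (1, 0, 0) + oscale (1 / a) (ov (0, 0, 1)) \<in> ?g ` B" "ov (0, 0, 1) \<in> ?g ` B"
    "oscale (- (a * a)) (ov (0, 1, 0)) \<in> ?g ` B"
    using U1 V3 q by (metis imageI)+
  then have "ou (1, 0, 0) \<in> ?g ` B" "ov (0, 0, 1) \<in> ?g ` B"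
    "oscale (- 1 / (a * a)) (oscale (- (a * a)) (ov (0, 1, 0))) \<in> ?g ` B"
    using gB.diff_mem[OF _ gB.scale_mem] gB.scale_mem by (metis add_diff_cancel_right')+
  then show False
    using gB.not_contains_ou1_ov2_ov3 a by simp
qed

lemma nil_not_contains_ou1_ou2_normalized:
  assumes U1: "ou (1, 0, 0) \<in> B" and nil: "\<forall>x\<in>B. omult x x = 0"
    and q1: "Oct a (0, 1, 0) (0, v2, v3) b \<in> B"
  shows False
proof -
  have "omult (ou (1, 0, 0)) (Oct a (0, 1, 0) (0, v2, v3) b) - oscale b (ou (1, 0, 0)) = ov (0, 0, 1)"
    by simp
  then have V3: "ov (0, 0, 1) \<in> B"
    using diff_mem[OF mult_mem[OF U1 q1] scale_mem[OF U1, of b]] by (simp only:)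
  have "Oct a (0, 1, 0) (0, v2, v3) b - oscale v3 (ov (0, 0, 1)) = Oct a (0, 1, 0) (0, v2, 0) b"
    by simp
  then have q: "Oct a (0, 1, 0) (0, v2, 0) b \<in> B"
    using diff_mem[OF q1 scale_mem[OF V3, of v3]] by (simp only:)
  then have ab: "a + b = 0" "a * b = v2"
    using nil square_zero_iff[of "Oct a (0, 1, 0) (0, v2, 0) b"] by auto
  have b: "b = - a"
    using ab(1) by (simp add: eq_neg_iff_add_eq_0 add.commute)
  have v2: "v2 = - (a * a)"
    using ab(2) b by simp
  show False
  proof (cases "a = 0")
    case True
    then have "ou (0, 1, 0) \<in> B"
      using q b v2 by simp
    then show False
      using not_contains_ou1_ou2_ov3 U1 V3 by blast
  next
    case False
    then show False
      using not_contains_ou1_ov3_nilpotent_u2 U1 V3 q b v2 by simp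
  qed
qed

lemma nil_not_contains_ou1:
  assumes U1: "ou (1, 0, 0) \<in> B" and nil: "\<forall>x\<in>B. omult x x = 0"
  shows False
proof (cases "\<forall>w\<in>B. torus_bounded w")
  case True
  then show False
    using not_contracted U1 ou1_contracted by blast
next
  case False
  then obtain w where "w \<in> B" "\<not> torus_bounded w"
    by blast
  moreover obtain a u1 u2 u3 v1 v2 v3 b where "w = Oct a (u1, u2, u3) (v1, v2, v3) b"
    by (rule oct_coords_cases)
  ultimately have w: "Oct a (u1, u2, u3) (v1, v2, v3) b \<in> B"
    and unbounded: "\<not> torus_bounded (Oct a (u1, u2, u3) (v1, v2, v3) b)"
    by simp_all
  have v1: "v1 = 0"
    by (rule square_zero_subalgebra_v1_eq_0[OF subalgebra U1 nil w])
  then have "(u2, u3) \<noteq> (0, 0)"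
    using unbounded by simp
  then obtain M v2' v3' where M: "det3 M = 1" "sl3_act M (ou (1, 0, 0)) = ou (1, 0, 0)"
    "sl3_act M (Oct a (0, u2, u3) (0, v2, v3) b) = Oct a (0, 1, 0) (0, v2', v3') b"
    using sl3_normalize_u23 by blast
  interpret gB: small_closed_subalgebra "sl3_act M ` B" d
    by (rule small_closed_subalgebra_image[OF small_closed_subalgebra_axioms sl3_act_G2[OF M(1)]])
  have "Oct a (u1, u2, u3) (v1, v2, v3) b - oscale u1 (ou (1, 0, 0)) \<in> B"
    using w U1 by (intro diff_mem scale_mem)
  then have "Oct a (0, u2, u3) (0, v2, v3) b \<in> B"
    using v1 by simp
  then have "Oct a (0, 1, 0) (0, v2', v3') b \<in> sl3_act M ` B"
    using M(3) by (metis imageI)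
  moreover have "ou (1, 0, 0) \<in> sl3_act M ` B"
    using U1 M(2) by (metis imageI)
  moreover have "\<forall>x\<in>sl3_act M ` B. omult x x = 0"
    using G2_image_square_zero[OF sl3_act_G2[OF M(1)] nil] .
  ultimately show False
    using gB.nil_not_contains_ou1_ou2_normalized by blast
qed

lemma no_oone_no_idempotent_dim_0:
  assumes one: "oone \<notin> B" and no_idem: "\<forall>e\<in>B. \<not> nontrivial_idempotent e"
  shows "d = 0"
proof (rule ccontr)
  assume "d \<noteq> 0"
  then obtain y where y: "y \<in> B" "y \<noteq> 0"
    using has_dim_le_length[OF has_dim, of "[]"] by (fastforce simp: span_list_def)
  obtain g where g: "g \<in> G2" "g y = ou (1, 0, 0)"
    using G2_conj_square_zero[OF no_idempotent_square_zero[OF subalgebra one no_idem y(1)] y(2)] by blast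
  interpret gB: small_closed_subalgebra "g ` B" d
    by (rule small_closed_subalgebra_image[OF small_closed_subalgebra_axioms g(1)])
  have "\<forall>x\<in>g ` B. omult x x = 0"
    using G2_image_square_zero[OF g(1)] no_idempotent_square_zero[OF subalgebra one no_idem] by blast
  moreover have "ou (1, 0, 0) \<in> g ` B"
    using y(1) g(2) by (metis imageI)
  ultimately show False
    using gB.nil_not_contains_ou1 by blast
qed

lemma classification:
  assumes ac: "alg_closed TYPE('a)" and ch: "CHAR('a) = 2" and d: "1 \<le> d"
  shows "\<exists>g\<in>G2. (d = 1 \<and> (g ` B = span_list [oone] \<or> g ` B = span_list [oe1]))
                 \<or> (d = 2 \<and> g ` B = span_list [oe1, oe2])"
proof (cases "\<exists>e\<in>B. nontrivial_idempotent e")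
  case True
  then obtain e g where e: "e \<in> B" and g: "g \<in> G2" "g e = oe1"
    using G2_conj_idempotent by blast
  interpret gB: small_closed_subalgebra "g ` B" d
    by (rule small_closed_subalgebra_image[OF small_closed_subalgebra_axioms g(1)])
  have "oe1 \<in> g ` B"
    using e g(2) by (metis imageI)
  then show ?thesis
    using gB.e1_mem_cases g(1) by blast
next
  case no_idem: False
  show ?thesis
  proof (cases "oone \<in> B")
    case True
    then have "d = 1"
      using oone_mem_no_idempotent_dim_le_1[OF ac ch] no_idem d by fastforce
    then have "B \<subseteq> span_list [oone]"
      using has_dim_subset_span_list[OF has_dim lin_indep_oone] True by simp
    then have "B = span_list [oone]"
      using basis_of_spanning_lin_indep[OF lin_indep_oone] True by simp
    then show ?thesis
      using \<open>d = 1\<close> G2_id by (intro bexI[of _ id]) simp_all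
  next
    case False
    then show ?thesis
      using no_oone_no_idempotent_dim_0 no_idem d by fastforce
  qed
qed

end

theorem corollary7p10:
  fixes A :: "'a::field oct set" and d :: nat
  assumes "alg_closed TYPE('a)"
    and "CHAR('a) = 2"
    and "subalgebra A"
    and "has_dim A d"
    and "1 \<le> d" and "d \<le> 3"
    and "\<exists>h\<in>G2. \<exists>as. is_basis as (h ` A) \<and> zariski_closed d (G2_orbit_tuple as)"
  shows "\<exists>g\<in>G2. (d = 1 \<and> (g ` A = span_list [oone] \<or> g ` A = span_list [oe1]))
                 \<or> (d = 2 \<and> g ` A = span_list [oe1, oe2])"
proof -
  obtain h as where h: "h \<in> G2" "is_basis as (h ` A)" "zariski_closed d (G2_orbit_tuple as)"
    using assms(7) by blast
  have dim: "has_dim (h ` A) d"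
    using G2_image_has_dim[OF h(1) assms(4)] .
  then have "closed_orbit (h ` A)"
    unfolding closed_orbit_def using h(2,3) has_dim_basis_length by blast
  then interpret hA: small_closed_subalgebra "h ` A" d
    using G2_image_subalgebra[OF h(1) assms(3)] dim assms(6) alg_closed_infinite[OF assms(1)]
    by unfold_locales
  obtain g where "g \<in> G2" "(d = 1 \<and> (g ` h ` A = span_list [oone] \<or> g ` h ` A = span_list [oe1]))
      \<or> (d = 2 \<and> g ` h ` A = span_list [oe1, oe2])"
    using hA.classification[OF assms(1,2,5)] by blast
  then show ?thesis
    using G2_comp[OF _ h(1)] by (metis image_comp)
qed

end
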